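(* Let $\Omega\subset\mathbb{R}^d$ ($d=2,3$) be a rectangular box with periodic boundary conditions, let $\nu>0$ and $\gamma>0$, and let $\bm F\in L^\infty(0,\infty;\bm H)$. Let $0=t_0<t_1<t_2<\cdots$ be an arbitrary sequence of time nodes with step sizes $\tau_k=t_k-t_{k-1}>0$ (no restriction on the step sizes or their ratios). Assume $(\bm u^i,r^i)\in\big((\dot H^\alpha_{\mathrm{per}}(\Omega))^d\cap\bm H\big)\times\mathbb{R}$ for $i=0,1$ with $\alpha\ge \tfrac34$, and let $(\bm u^{n},r^{n})_{n\ge 0}$ be generated by the ETD-mr-SAV-MS2o scheme: for every $n\ge1$, $$\bm u^{n+1}=\varphi_0(\tau_{n+1}\nu\mathcal L)\bm u^n-\tau_{n+1}\big(1-(r^{n+1})^2\big)\varphi_1(\tau_{n+1}\nu\mathcal L)B(\tilde{\bm u}^{n+\frac12},\tilde{\bm u}^{n+\frac12})+\tau_{n+1}\varphi_1(\tau_{n+1}\nu\mathcal L)\bm F^{n+\frac12},$$ $$r^{n+1}=\varphi_0(\tau_{n+1}\gamma)r^n+\tau_{n+1}(1-r^{n+1})\big\langle\varphi_1(\tau_{n+1}\nu\mathcal L)B(\tilde{\bm u}^{n+\frac12},\tilde{\bm u}^{n+\frac12}),\bm u^{n+1}\big\rangle,$$ where $\tilde{\bm u}^{n+\frac12}=\frac{\tau_{n+1}+2\tau_n}{2\tau_n}\bm u^n-\frac{\tau_{n+1}}{2\tau_n}\bm u^{n-1}$ and $\bm F^{n+\frac12}=\bm F(t_n+\tfrac12\tau_{n+1})$.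 Set $\theta:=\min\{\nu\lambda_1,\gamma\}>0$. Then for all $n\ge1$, $$\|\bm u^{n+1}\|^2+|r^{n+1}+1|^2\le e^{-\theta\sum_{i=1}^n\tau_{i+1}}\big(\|\bm u^1\|^2+|r^1+1|^2\big)+\frac1\theta\Big(\frac{1}{\nu\lambda_1}\|\bm F\|^2_{L^\infty(0,\infty;\bm H)}+\gamma\Big).$$
   Context: $\|\cdot\|$ denotes the $L^2(\Omega)$ norm and $\langle\cdot,\cdot\rangle$ the $L^2$ inner product (extended to the duality pairing between $\dot H^1_{\mathrm{per}}$ and $H^{-1}_{\mathrm{per}}$). $(\dot H^k_{\mathrm{per}}(\Omega))^d$ is the closure in $(H^k(\Omega))^d$ of the $d$-dimensional zero-mean trigonometric polynomials; $\bm H=\{\bm u\in(\dot H^0_{\mathrm{per}}(\Omega))^d:\nabla\cdot\bm u=0\}$ and $\bm V=\{\bm u\in(\dot H^1_{\mathrm{per}}(\Omega))^d:\nabla\cdot\bm u=0\}$. $\mathcal P$ is the Leray–Hopf orthogonal projection of zero-mean $L^2$ vector fields onto $\bm H$; $\mathcal L=-\mathcal P\Delta$ is the Stokes operator, with smallest eigenvalue $\lambda_1>0$; $B(\bm u,\bm v)=\mathcal P(\bm u\cdot\nabla\bm v)$. The scalar functions are $\varphi_0(z)=e^{-z}$ and $\varphi_1(z)=(1-e^{-z})/z$ (with $\varphi_1(0)=1$); $\varphi_j(\tau\nu\mathcal L)$ is defined spectrally, i.e. acting on each divergence-free Fourier mode $\hat{\bm h}_{\bm k}e^{i\bm k\cdot\bm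 x}$ ($\bm k\ne0$) by multiplication with $\varphi_j(\tau\nu\lambda_{\bm k})$, where $\lambda_{\bm k}$ is the corresponding Stokes eigenvalue. *)

theory Defs
  imports "HOL-Analysis.Analysis"
begin

text \<open>Fourier representation on the periodic box \<Omega> = prod_j [0, L_j].
  A (real) vector field on \<Omega> is represented by its Fourier coefficients
  u :: int^'d \<Rightarrow> complex^'d, i.e. u(x) = sum_m u(m) exp(i k_m . x),
  with wave vector k_m = (2 pi m_j / L_j)_j.\<close>

type_synonym 'd field = "int^'d \<Rightarrow> complex^'d"

definition kvec :: "real^'d \<Rightarrow> int^'d \<Rightarrow> real^'d" where
  "kvec L m = (\<chi> j. 2 * pi * of_int (m $ j) / L $ j)"

definition stokes_eig :: "real^'d \<Rightarrow> int^'d \<Rightarrow> real" where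
  "stokes_eig L m = (norm (kvec L m))\<^sup>2"

definition lambda1 :: "real^'d \<Rightarrow> real" where
  "lambda1 L = Inf (stokes_eig L ` (UNIV - {0}))"

definition vol :: "real^'d \<Rightarrow> real" where
  "vol L = (\<Prod>j\<in>UNIV. L $ j)"

text \<open>Membership in H: zero mean, divergence free, real valued, square integrable.\<close>
definition in_H :: "real^'d \<Rightarrow> 'd field \<Rightarrow> bool" where
  "in_H L u \<longleftrightarrow> u 0 = 0
     \<and> (\<forall>m. (\<Sum>j\<in>UNIV. complex_of_real (kvec L m $ j) * u m $ j) = 0)
     \<and> (\<forall>m. u (- m) = (\<chi> j. cnj (u m $ j)))
     \<and> (\<lambda>m. (norm (u m))\<^sup>2) summable_on UNIV"

definition in_Hdot :: "real \<Rightarrow> real^'d \<Rightarrow> 'd field \<Rightarrow> bool" where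
  "in_Hdot \<alpha> L u \<longleftrightarrow> u 0 = 0
     \<and> (\<lambda>m. stokes_eig L m powr \<alpha> * (norm (u m))\<^sup>2) summable_on UNIV"

definition l2norm_sq :: "real^'d \<Rightarrow> 'd field \<Rightarrow> real" where
  "l2norm_sq L u = vol L * (\<Sum>\<^sub>\<infinity>m. (norm (u m))\<^sup>2)"

definition l2inner :: "real^'d \<Rightarrow> 'd field \<Rightarrow> 'd field \<Rightarrow> real" where
  "l2inner L f v = Re (complex_of_real (vol L) *
      (\<Sum>\<^sub>\<infinity>m. (\<Sum>j\<in>UNIV. f m $ j * cnj (v m $ j))))"

definition phi0 :: "real \<Rightarrow> real" where
  "phi0 z = exp (- z)"

definition phi1 :: "real \<Rightarrow> real" where
  "phi1 z = (if z = 0 then 1 else (1 - exp (- z)) / z)"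

definition specop :: "real^'d \<Rightarrow> (real \<Rightarrow> real) \<Rightarrow> 'd field \<Rightarrow> 'd field" where
  "specop L f u = (\<lambda>m. f (stokes_eig L m) *\<^sub>R u m)"

definition leray :: "real^'d \<Rightarrow> 'd field \<Rightarrow> 'd field" where
  "leray L w = (\<lambda>m. if m = 0 then 0 else
      w m - ((\<Sum>j\<in>UNIV. complex_of_real (kvec L m $ j) * w m $ j)
              / complex_of_real (stokes_eig L m))
            *s (\<chi> j. complex_of_real (kvec L m $ j)))"

text \<open>Fourier coefficients of (u . grad) v.\<close>
definition convec :: "real^'d \<Rightarrow> 'd field \<Rightarrow> 'd field \<Rightarrow> 'd field" where
  "convec L u v = (\<lambda>m. \<Sum>\<^sub>\<infinity>p.
      (\<Sum>j\<in>UNIV. u p $ j * (\<i> * complex_of_real (kvec L (m - p) $ j))) *s v (m - p))"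

definition Bop :: "real^'d \<Rightarrow> 'd field \<Rightarrow> 'd field \<Rightarrow> 'd field" where
  "Bop L u v = leray L (convec L u v)"

text \<open>Norm in L^infinity(0,infinity;H) (supremum, F is evaluated pointwise).\<close>
definition Linf_norm :: "real^'d \<Rightarrow> (real \<Rightarrow> 'd field) \<Rightarrow> real" where
  "Linf_norm L F = (SUP s\<in>{0..}. sqrt (l2norm_sq L (F s)))"

end

theory Submission
  imports Defs
begin

text \<open>
  The energy \<open>\<parallel>u\<^sup>n\<parallel>\<^sup>2 + |r\<^sup>n + 1|\<^sup>2\<close> contracts by \<open>e\<^sup>-\<^sup>\<theta>\<^sup>\<tau>\<close> in every step, up to a source
  term.  Writing \<open>u\<^sup>n\<^sup>+\<^sup>1 = W - \<tau>(1 - r\<^sup>2) g\<close> with \<open>W\<close> the exponential integrator applied to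
  \<open>u\<^sup>n\<close> and the forcing, the identity \<open>\<parallel>u\<^sup>n\<^sup>+\<^sup>1\<parallel>\<^sup>2 = \<langle>W, u\<^sup>n\<^sup>+\<^sup>1\<rangle> - \<tau>(1 - r\<^sup>2)\<langle>g, u\<^sup>n\<^sup>+\<^sup>1\<rangle>\<close>
  and the equation for \<open>r\<close> eliminate the nonlinear term exactly; the linear parts are damped
  mode by mode at rate \<open>\<nu>\<lambda>\<^sub>1\<close> resp. \<open>\<gamma>\<close>, and a discrete Gronwall argument sums the steps.
  For the inner products to be the genuine \<open>L\<^sup>2\<close> ones all iterates must be square summable:
  the scheme preserves \<open>H\<^sup>3\<^sup>/\<^sup>4\<close>, because \<open>\<phi>\<^sub>1(\<tau>\<nu>\<A>)\<close> gains one derivative and the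
  convolution \<open>B(u, u)\<close> costs at most one in dimension \<open>d \<le> 3\<close>.
\<close>

section \<open>Wave numbers\<close>

definition wavenum :: "real^'d::finite \<Rightarrow> int^'d \<Rightarrow> real" where
  "wavenum L m = norm (kvec L m)"

lemma kvec_diff: "kvec L (m - p) = kvec L m - kvec L p"
  by (simp add: vec_eq_iff kvec_def diff_divide_distrib algebra_simps)

lemma kvec_zero [simp]: "kvec L 0 = 0"
  by (simp add: vec_eq_iff kvec_def)

lemma wavenum_nonneg [simp]: "wavenum L m \<ge> 0"
  by (simp add: wavenum_def)

lemma wavenum_zero [simp]: "wavenum L 0 = 0"
  by (simp add: wavenum_def)

lemma wavenum_triangle: "wavenum L q \<le> wavenum L m + wavenum L (m - q)"
proof -
  have "kvec L q = kvec L m - kvec L (m - q)" by (simp add: kvec_diff)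
  then show ?thesis unfolding wavenum_def by (metis norm_triangle_ineq4)
qed

lemma stokes_eig_eq_wavenum: "stokes_eig L m = (wavenum L m)^2"
  by (simp add: stokes_eig_def wavenum_def)

lemma stokes_eig_nonneg [simp]: "stokes_eig L m \<ge> 0"
  by (simp add: stokes_eig_def)

definition kmin :: "real^'d::finite \<Rightarrow> real" where
  "kmin L = Min (range (\<lambda>j. 2 * pi / L$j))"

lemma kmin_pos: "\<forall>j. L$j > 0 \<Longrightarrow> kmin L > 0"
  unfolding kmin_def by (subst Min_gr_iff) auto

lemma wavenum_sq_ge:
  assumes box: "\<forall>j. L$j > 0"
  shows "(wavenum L m)^2 \<ge> (kmin L)^2 * (\<Sum>j\<in>UNIV. (real_of_int (m$j))^2)"
proof -
  have "(kmin L)^2 \<le> (2 * pi / L$j)^2" for j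
  proof (rule power_mono)
    show "kmin L \<le> 2 * pi / L$j" unfolding kmin_def by (rule Min_le) auto
  qed (use kmin_pos[OF box] in simp)
  then have "(\<Sum>j\<in>UNIV. (kmin L)^2 * (real_of_int (m$j))^2)
      \<le> (\<Sum>j\<in>UNIV. (2 * pi / L$j)^2 * (real_of_int (m$j))^2)"
    by (intro sum_mono mult_right_mono) auto
  moreover have "(wavenum L m)^2 = (\<Sum>j\<in>UNIV. (2 * pi / L$j)^2 * (real_of_int (m$j))^2)"
    unfolding wavenum_def power2_norm_eq_inner inner_vec_def
    by (simp add: kvec_def power2_eq_square algebra_simps)
  moreover have "(kmin L)^2 * (\<Sum>j\<in>UNIV. (real_of_int (m$j))^2)
      = (\<Sum>j\<in>UNIV. (kmin L)^2 * (real_of_int (m$j))^2)"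
    by (rule sum_distrib_left)
  ultimately show ?thesis by linarith
qed

lemma sum_sq_of_int_ge_one:
  fixes m :: "int^'d::finite"
  assumes "m \<noteq> 0"
  shows "(\<Sum>j\<in>UNIV. (real_of_int (m$j))^2) \<ge> 1"
proof -
  obtain j where "m$j \<noteq> 0" using assms by (auto simp: vec_eq_iff)
  then have "1 \<le> \<bar>real_of_int (m$j)\<bar>" by linarith
  then have "1 \<le> \<bar>real_of_int (m$j)\<bar>^2" by (rule one_le_power)
  then have "1 \<le> (real_of_int (m$j))^2" by simp
  also have "\<dots> \<le> (\<Sum>j\<in>UNIV. (real_of_int (m$j))^2)"
    by (rule member_le_sum) auto
  finally show ?thesis .
qed

lemma wavenum_ge_kmin:
  assumes box: "\<forall>j. L$j > 0" and "m \<noteq> 0"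
  shows "wavenum L m \<ge> kmin L"
proof -
  have "(kmin L)^2 \<le> (kmin L)^2 * (\<Sum>j\<in>UNIV. (real_of_int (m$j))^2)"
    using sum_sq_of_int_ge_one[OF \<open>m \<noteq> 0\<close>] by (simp add: mult_le_cancel_left1)
  also have "\<dots> \<le> (wavenum L m)^2" by (rule wavenum_sq_ge[OF box])
  finally show ?thesis by (rule power2_le_imp_le) simp
qed

lemma wavenum_pos: "\<forall>j. L$j > 0 \<Longrightarrow> m \<noteq> 0 \<Longrightarrow> wavenum L m > 0"
  using wavenum_ge_kmin kmin_pos by (metis order_less_le_trans)

lemma lambda1_le_stokes_eig: "m \<noteq> 0 \<Longrightarrow> lambda1 L \<le> stokes_eig L m"
  unfolding lambda1_def by (rule cInf_lower) (auto intro!: bdd_belowI[where m=0])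

lemma lambda1_pos:
  assumes box: "\<forall>j. L$j > 0"
  shows "lambda1 L > 0"
proof -
  have "(kmin L)^2 \<le> lambda1 L"
    unfolding lambda1_def
  proof (rule cInf_greatest)
    have "vec 1 \<noteq> (0 :: int^'d)" by (simp add: vec_eq_iff)
    then show "stokes_eig L ` (UNIV - {0}) \<noteq> {}" by blast
  next
    fix x assume "x \<in> stokes_eig L ` (UNIV - {0})"
    then obtain m where "m \<noteq> 0" "x = stokes_eig L m" by auto
    then show "(kmin L)^2 \<le> x"
      using wavenum_ge_kmin[OF box] kmin_pos[OF box] by (simp add: stokes_eig_eq_wavenum power_mono)
  qed
  moreover have "(kmin L)^2 > 0" using kmin_pos[OF box] by simp
  ultimately show ?thesis by linarith
qed

section \<open>Lattice sums\<close>

lemma sq_powr: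
  fixes x :: real
  assumes "0 \<le> x"
  shows "(x^2) powr a = x powr (2 * a)"
proof -
  have "x^2 = x powr 2" using assms by simp
  then show ?thesis by (metis powr_powr)
qed

lemma summable_on_nat_powr:
  assumes e: "e > 1/2"
  shows "(\<lambda>n::nat. (1 + (real n)^2) powr (-e)) summable_on UNIV"
proof -
  have "summable (\<lambda>n::nat. real n powr (-2*e))"
    using e by (subst summable_real_powr_iff) simp
  then have s: "summable (\<lambda>n::nat. 2 powr e * real (Suc n) powr (-2*e))"
    by (subst summable_Suc_iff) (rule summable_mult)
  have "(1 + (real n)^2) powr (-e) \<le> 2 powr e * real (Suc n) powr (-2*e)" for n
  proof -
    have "0 \<le> (real n - 1)^2" by simp
    then have "(real (Suc n))^2 / 2 \<le> 1 + (real n)^2"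
      by (simp add: power2_eq_square algebra_simps)
    then have "(1 + (real n)^2) powr (-e) \<le> ((real (Suc n))^2 / 2) powr (-e)"
      using e by (intro powr_mono2') auto
    also have "\<dots> = ((real (Suc n))^2) powr (-e) / 2 powr (-e)"
      by (simp add: powr_divide)
    also have "\<dots> = 2 powr e * real (Suc n) powr (-2*e)"
      by (simp add: sq_powr powr_minus divide_simps)
    finally show ?thesis .
  qed
  then have "summable (\<lambda>n::nat. (1 + (real n)^2) powr (-e))"
    by (intro summable_comparison_test[OF _ s]) auto
  then show ?thesis
    by (rule summable_nonneg_imp_summable_on) simp
qed

lemma summable_on_int_powr:
  assumes e: "e > 1/2"
  shows "(\<lambda>n::int. (1 + (real_of_int n)^2) powr (-e)) summable_on UNIV"
proof -
  define h where "h n = (1 + (real_of_int n)^2) powr (-e)" for n :: int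
  have "h summable_on range int"
    using summable_on_nat_powr[OF e] by (subst summable_on_reindex) (auto simp: h_def o_def)
  moreover have "h summable_on range (\<lambda>n. - int n)"
    using summable_on_nat_powr[OF e] by (subst summable_on_reindex) (auto simp: h_def o_def inj_on_def)
  ultimately have "h summable_on (range int \<union> range (\<lambda>n. - int n))"
    by (rule summable_on_union)
  moreover have "range int \<union> range (\<lambda>n. - int n) = (UNIV :: int set)"
  proof (intro set_eqI iffI)
    fix x :: int
    show "x \<in> range int \<union> range (\<lambda>n. - int n)"
    proof (cases "x \<ge> 0")
      case True
      then have "x = int (nat x)" by simp
      then show ?thesis by blast
    next
      case False
      then have "x = - int (nat (- x))" by simp
      then show ?thesis by blast
    qed
  qed simp
  ultimately show ?thesis unfolding h_def by simp
qed

lemma summable_on_prod_coordinates: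
  fixes h :: "int \<Rightarrow> real"
  assumes hs: "h summable_on UNIV" and hn: "\<And>n. h n \<ge> 0"
  shows "(\<lambda>m::int^'d::finite. \<Prod>j\<in>UNIV. h (m$j)) summable_on UNIV"
proof (rule nonneg_bdd_above_summable_on)
  show "0 \<le> (\<Prod>j\<in>UNIV. h (m$j))" for m :: "int^'d" by (simp add: hn prod_nonneg)
  show "bdd_above (sum (\<lambda>m::int^'d. \<Prod>j\<in>UNIV. h (m$j)) ` {M. M \<subseteq> UNIV \<and> finite M})"
  proof (rule bdd_aboveI2)
    fix M :: "(int^'d) set" assume "M \<in> {M. M \<subseteq> UNIV \<and> finite M}"
    then have fM: "finite M" by simp
    define P where "P j = (\<lambda>m. m$j) ` M" for j
    have fP: "finite (P j)" for j using fM by (simp add: P_def)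
    have "(\<Sum>m\<in>M. \<Prod>j\<in>UNIV. h (m$j)) = (\<Sum>g\<in>vec_nth ` M. \<Prod>j\<in>UNIV. h (g j))"
      by (subst sum.reindex) (auto simp: inj_on_def vec_nth_inject)
    also have "\<dots> \<le> (\<Sum>g\<in>PiE UNIV P. \<Prod>j\<in>UNIV. h (g j))"
      by (rule sum_mono2) (auto simp: P_def fM prod_nonneg hn intro!: finite_PiE)
    also have "\<dots> = (\<Prod>j\<in>UNIV. \<Sum>n\<in>P j. h n)"
      by (rule prod_sum_PiE[symmetric]) (auto simp: fP)
    also have "\<dots> \<le> (\<Prod>j\<in>(UNIV::'d set). infsum h UNIV)"
      by (rule prod_mono) (auto simp: sum_nonneg hn fP intro!: finite_sum_le_infsum hs)
    finally show "(\<Sum>m\<in>M. \<Prod>j\<in>UNIV. h (m$j)) \<le> (\<Prod>j\<in>(UNIV::'d set). infsum h UNIV)" .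
  qed
qed

text \<open>The lattice sum \<open>\<Sum>\<^sub>m |k\<^sub>m|\<^sup>-\<^sup>s\<close> converges for \<open>s > d\<close>: compare with
  \<open>\<Prod>\<^sub>j (1 + m\<^sub>j\<^sup>2)\<^sup>-\<^sup>s\<^sup>/\<^sup>(\<^sup>2\<^sup>d\<^sup>)\<close>, a product of convergent one-dimensional sums.\<close>
lemma summable_wavenum_powr:
  fixes L :: "real^'d::finite" and s :: real
  assumes box: "\<forall>j. L$j > 0" and s: "s > CARD('d)"
  shows "(\<lambda>m. wavenum L m powr (-s)) summable_on UNIV"
proof -
  define d where "d = real CARD('d)"
  have d: "d \<ge> 1" unfolding d_def by (simp add: Suc_leI)
  define e where "e = s / (2 * d)"
  have e: "e > 1/2" using s d by (simp add: e_def d_def field_simps)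
  define h where "h n = (1 + (real_of_int n)^2) powr (-e)" for n
  define C where "C = ((kmin L)^2 / 2) powr (-s/2)"
  have hn: "h n \<ge> 0" for n by (simp add: h_def)
  have "(\<lambda>m::int^'d. C * (\<Prod>j\<in>UNIV. h (m$j))) summable_on UNIV"
    unfolding h_def
    by (intro summable_on_cmult_right summable_on_prod_coordinates summable_on_int_powr[OF e]) simp
  then show ?thesis
  proof (rule summable_on_comparison_test)
    fix m :: "int^'d"
    show "0 \<le> wavenum L m powr (-s)" by simp
    show "wavenum L m powr (-s) \<le> C * (\<Prod>j\<in>UNIV. h (m$j))"
    proof (cases "m = 0")
      case True then show ?thesis by (simp add: C_def prod_nonneg hn)
    next
      case False
      define N where "N = (\<Sum>j\<in>UNIV. (real_of_int (m$j))^2)"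
      have N1: "N \<ge> 1" unfolding N_def by (rule sum_sq_of_int_ge_one[OF False])
      have k0: "kmin L > 0" by (rule kmin_pos[OF box])
      have "wavenum L m powr (-s) = ((wavenum L m)^2) powr (-s/2)"
        by (simp add: sq_powr)
      also have "\<dots> \<le> ((kmin L)^2 / 2 * (1 + N)) powr (-s/2)"
      proof (rule powr_mono2')
        have "(kmin L)^2 / 2 * (1 + N) \<le> (kmin L)^2 * N"
          using N1 k0 by (simp add: field_simps mult_left_mono)
        then show "(kmin L)^2 / 2 * (1 + N) \<le> (wavenum L m)^2"
          using wavenum_sq_ge[OF box, of m] unfolding N_def by linarith
      qed (use k0 N1 s d d_def in \<open>auto simp: add_pos_nonneg\<close>)
      also have "\<dots> = C * (1 + N) powr (-s/2)"
        using N1 powr_mult[of "(kmin L)^2 / 2" "1 + N" "-s/2"] by (simp add: C_def)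
      also have "\<dots> \<le> C * (\<Prod>j\<in>UNIV. h (m$j))"
      proof (rule mult_left_mono)
        have "(\<Prod>j\<in>UNIV. 1 + (real_of_int (m$j))^2) \<le> (\<Prod>j\<in>(UNIV::'d set). 1 + N)"
          by (intro prod_mono conjI add_nonneg_nonneg add_left_mono)
            (auto simp: N_def intro: member_le_sum)
        then have "((1 + N) ^ CARD('d)) powr (-e) \<le> (\<Prod>j\<in>UNIV. 1 + (real_of_int (m$j))^2) powr (-e)"
          using e by (intro powr_mono2') (auto intro!: prod_pos add_pos_nonneg)
        moreover have "((1 + N) ^ CARD('d)) powr (-e) = (1 + N) powr (-s/2)"
          using N1 d by (simp add: powr_realpow[symmetric] powr_powr e_def d_def)
        ultimately show "(1 + N) powr (-s/2) \<le> (\<Prod>j\<in>UNIV. h (m$j))"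
          by (simp add: h_def prod_powr_distrib)
      qed (simp add: C_def)
      finally show ?thesis .
    qed
  qed
qed

section \<open>Sobolev classes\<close>

definition square_summable :: "('a \<Rightarrow> 'b::real_normed_vector) \<Rightarrow> bool" where
  "square_summable w \<longleftrightarrow> (\<lambda>m. (norm (w m))^2) summable_on UNIV"

lemma in_Hdot_normbound:
  assumes u: "in_Hdot \<alpha> L u" and b: "\<And>m. norm (w m) \<le> C * norm (u m)"
  shows "in_Hdot \<alpha> L w"
  unfolding in_Hdot_def
proof
  show "w 0 = 0" using b[of 0] u by (simp add: in_Hdot_def)
  have "(\<lambda>m. C^2 * (stokes_eig L m powr \<alpha> * (norm (u m))^2)) summable_on UNIV"
    using u unfolding in_Hdot_def by (intro summable_on_cmult_right) auto
  then show "(\<lambda>m. stokes_eig L m powr \<alpha> * (norm (w m))^2) summable_on UNIV"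
  proof (rule summable_on_comparison_test)
    fix m
    have "norm (w m) \<le> \<bar>C\<bar> * norm (u m)"
      using b[of m] by (smt (verit) mult_right_mono norm_ge_zero)
    then have "(norm (w m))^2 \<le> C^2 * (norm (u m))^2"
      by (metis norm_ge_zero power2_abs power_mono power_mult_distrib)
    then have "stokes_eig L m powr \<alpha> * (norm (w m))^2 \<le> stokes_eig L m powr \<alpha> * (C^2 * (norm (u m))^2)"
      by (rule mult_left_mono) simp
    then show "stokes_eig L m powr \<alpha> * (norm (w m))^2 \<le> C^2 * (stokes_eig L m powr \<alpha> * (norm (u m))^2)"
      by (simp add: mult.left_commute)
  qed simp
qed

lemma in_Hdot_add:
  assumes u: "in_Hdot \<alpha> L u" and v: "in_Hdot \<alpha> L v"
  shows "in_Hdot \<alpha> L (\<lambda>m. u m + v m)"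
  unfolding in_Hdot_def
proof
  show "u 0 + v 0 = 0" using u v by (simp add: in_Hdot_def)
  have "(\<lambda>m. 2 * (stokes_eig L m powr \<alpha> * (norm (u m))^2) + 2 * (stokes_eig L m powr \<alpha> * (norm (v m))^2))
      summable_on UNIV"
    using u v unfolding in_Hdot_def by (intro summable_on_add summable_on_cmult_right) auto
  then show "(\<lambda>m. stokes_eig L m powr \<alpha> * (norm (u m + v m))^2) summable_on UNIV"
  proof (rule summable_on_comparison_test)
    fix m
    have "(norm (u m + v m))^2 \<le> (norm (u m) + norm (v m))^2"
      by (intro power_mono norm_triangle_ineq) simp
    also have "\<dots> \<le> 2 * (norm (u m))^2 + 2 * (norm (v m))^2"
      using sum_squares_ge_zero[of "norm (u m) - norm (v m)" 0]
      by (simp add: power2_eq_square algebra_simps)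
    finally show "stokes_eig L m powr \<alpha> * (norm (u m + v m))^2
        \<le> 2 * (stokes_eig L m powr \<alpha> * (norm (u m))^2) + 2 * (stokes_eig L m powr \<alpha> * (norm (v m))^2)"
      by (metis (no_types, lifting) distrib_left mult.left_commute mult_left_mono powr_ge_zero)
  qed simp
qed

lemma in_Hdot_scaleR: "in_Hdot \<alpha> L u \<Longrightarrow> in_Hdot \<alpha> L (\<lambda>m. c *\<^sub>R u m)"
  by (rule in_Hdot_normbound[where C="\<bar>c\<bar>"]) auto

lemma in_Hdot_diff: "in_Hdot \<alpha> L u \<Longrightarrow> in_Hdot \<alpha> L v \<Longrightarrow> in_Hdot \<alpha> L (\<lambda>m. u m - v m)"
  using in_Hdot_add[of \<alpha> L u "\<lambda>m. (-1) *\<^sub>R v m"] in_Hdot_scaleR[of \<alpha> L v "-1"] by simp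

lemma in_Hdot_specop:
  assumes "in_Hdot \<alpha> L u" and "\<And>x. x \<ge> 0 \<Longrightarrow> \<bar>f x\<bar> \<le> C"
  shows "in_Hdot \<alpha> L (specop L f u)"
  by (rule in_Hdot_normbound[OF assms(1), where C=C])
    (simp add: specop_def assms(2) mult_right_mono)

lemma in_Hdot_antimono:
  assumes box: "\<forall>j. L$j > 0" and "\<beta> \<le> \<alpha>" and w: "in_Hdot \<alpha> L w"
  shows "in_Hdot \<beta> L w"
  unfolding in_Hdot_def
proof
  show "w 0 = 0" using w by (simp add: in_Hdot_def)
  define l0 where "l0 = (kmin L)^2"
  have l0: "l0 > 0" using kmin_pos[OF box] by (simp add: l0_def)
  have "(\<lambda>m. l0 powr (\<beta> - \<alpha>) * (stokes_eig L m powr \<alpha> * (norm (w m))^2)) summable_on UNIV"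
    using w unfolding in_Hdot_def by (intro summable_on_cmult_right) auto
  then show "(\<lambda>m. stokes_eig L m powr \<beta> * (norm (w m))^2) summable_on UNIV"
  proof (rule summable_on_comparison_test)
    fix m
    show "stokes_eig L m powr \<beta> * (norm (w m))^2
        \<le> l0 powr (\<beta> - \<alpha>) * (stokes_eig L m powr \<alpha> * (norm (w m))^2)"
    proof (cases "m = 0")
      case False
      have "l0 \<le> stokes_eig L m"
        using wavenum_ge_kmin[OF box False] kmin_pos[OF box]
        by (simp add: l0_def stokes_eig_eq_wavenum power_mono)
      then have "stokes_eig L m powr (\<beta> - \<alpha>) \<le> l0 powr (\<beta> - \<alpha>)"
        using l0 \<open>\<beta> \<le> \<alpha>\<close> by (intro powr_mono2') auto
      then have "stokes_eig L m powr (\<beta> - \<alpha>) * stokes_eig L m powr \<alpha>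
          \<le> l0 powr (\<beta> - \<alpha>) * stokes_eig L m powr \<alpha>"
        by (rule mult_right_mono) simp
      then have "stokes_eig L m powr \<beta> \<le> l0 powr (\<beta> - \<alpha>) * stokes_eig L m powr \<alpha>"
        by (simp flip: powr_add)
      then show ?thesis by (simp add: mult_right_mono flip: mult.assoc)
    qed (use w in \<open>simp add: in_Hdot_def\<close>)
  qed simp
qed

lemma square_summable_if_in_Hdot:
  assumes box: "\<forall>j. L$j > 0" and "0 \<le> \<alpha>" and w: "in_Hdot \<alpha> L w"
  shows "square_summable w"
proof -
  have w0: "in_Hdot 0 L w" by (rule in_Hdot_antimono[OF box \<open>0 \<le> \<alpha>\<close> w])
  have "(\<lambda>m. stokes_eig L m powr 0 * (norm (w m))^2) = (\<lambda>m. (norm (w m))^2)"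
  proof
    fix m
    show "stokes_eig L m powr 0 * (norm (w m))^2 = (norm (w m))^2"
      using w0 wavenum_pos[OF box, of m] by (cases "m = 0") (auto simp: in_Hdot_def stokes_eig_eq_wavenum)
  qed
  then show ?thesis using w0 unfolding in_Hdot_def square_summable_def by simp
qed

lemma phi0_nonneg: "phi0 z \<ge> 0"
  by (simp add: phi0_def)

lemma phi0_le_one: "z \<ge> 0 \<Longrightarrow> phi0 z \<le> 1"
  by (simp add: phi0_def)

lemma phi1_nonneg: "z \<ge> 0 \<Longrightarrow> phi1 z \<ge> 0"
  by (simp add: phi1_def)

lemma phi1_le_one: "z \<ge> 0 \<Longrightarrow> phi1 z \<le> 1"
  using exp_ge_add_one_self[of "-z"] by (simp add: phi1_def)

lemma phi1_le_inverse: "z > 0 \<Longrightarrow> phi1 z \<le> 1 / z"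
  by (simp add: phi1_def divide_right_mono)

text \<open>This is why \<open>\<phi>\<^sub>1(b\<A>)\<close> gains up to one derivative.\<close>
lemma powr_mult_phi1_sq_le:
  assumes "0 \<le> \<alpha>" "\<alpha> \<le> 1" and b: "b > 0" and lam: "lam \<ge> 0"
  shows "lam powr \<alpha> * (phi1 (b * lam))^2 \<le> 1 + 1 / b"
proof -
  define f where "f = phi1 (b * lam)"
  have f0: "0 \<le> f" and f1: "f \<le> 1" using b lam by (simp_all add: f_def phi1_nonneg phi1_le_one)
  have lamf: "lam * f \<le> 1 / b"
  proof (cases "lam = 0")
    case False
    then have "f \<le> 1 / (b * lam)" using b lam by (simp add: f_def phi1_le_inverse)
    then have "lam * f \<le> lam * (1 / (b * lam))" using lam by (rule mult_left_mono)
    then show ?thesis using False by simp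
  qed (use b in simp)
  have "lam powr \<alpha> \<le> 1 + lam"
  proof (cases "lam \<le> 1")
    case True
    then have "lam powr \<alpha> \<le> 1" using lam \<open>0 \<le> \<alpha>\<close> by (cases "lam = 0") (auto intro: powr_le1)
    then show ?thesis using lam by linarith
  next
    case False
    then have "lam powr \<alpha> \<le> lam powr 1" using \<open>\<alpha> \<le> 1\<close> by (intro powr_mono) auto
    then show ?thesis using lam by simp
  qed
  then have "lam powr \<alpha> * f^2 \<le> (1 + lam) * f^2"
    by (rule mult_right_mono) simp
  also have "\<dots> = f^2 + lam * f^2" by (simp add: distrib_right)
  also have "\<dots> \<le> 1 + lam * f"
    using f0 f1 lam
    by (intro add_mono mult_left_mono) (auto simp: power2_eq_square mult_le_one mult_left_le_one_le)
  finally show ?thesis using lamf by (simp add: f_def)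
qed

lemma in_Hdot_phi1:
  assumes "0 \<le> \<alpha>" "\<alpha> \<le> 1" and b: "b > 0" and F: "square_summable F" "F 0 = 0"
  shows "in_Hdot \<alpha> L (specop L (\<lambda>x. phi1 (b * x)) F)"
  unfolding in_Hdot_def
proof
  show "specop L (\<lambda>x. phi1 (b * x)) F 0 = 0" using F by (simp add: specop_def)
  have "(\<lambda>m. (1 + 1 / b) * (norm (F m))^2) summable_on UNIV"
    using F by (intro summable_on_cmult_right) (simp add: square_summable_def)
  then show "(\<lambda>m. stokes_eig L m powr \<alpha> * (norm (specop L (\<lambda>x. phi1 (b * x)) F m))^2) summable_on UNIV"
  proof (rule summable_on_comparison_test)
    fix m
    have "stokes_eig L m powr \<alpha> * (phi1 (b * stokes_eig L m))^2 * (norm (F m))^2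
        \<le> (1 + 1 / b) * (norm (F m))^2"
      using powr_mult_phi1_sq_le[OF assms(1-3)] by (intro mult_right_mono) simp_all
    then show "stokes_eig L m powr \<alpha> * (norm (specop L (\<lambda>x. phi1 (b * x)) F m))^2
        \<le> (1 + 1 / b) * (norm (F m))^2"
      using phi1_nonneg[of "b * stokes_eig L m"] b
      by (simp add: specop_def power_mult_distrib mult.assoc)
  qed simp
qed

section \<open>The nonlinear term\<close>

lemma infsum_Cauchy_Schwarz:
  fixes f g :: "'a \<Rightarrow> real"
  assumes f0: "\<And>x. f x \<ge> 0" and g0: "\<And>x. g x \<ge> 0"
    and fs: "(\<lambda>x. (f x)^2) summable_on A" and gs: "(\<lambda>x. (g x)^2) summable_on A"
  shows "(\<lambda>x. f x * g x) summable_on A"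
    and "(infsum (\<lambda>x. f x * g x) A)^2 \<le> infsum (\<lambda>x. (f x)^2) A * infsum (\<lambda>x. (g x)^2) A"
proof -
  have "(\<lambda>x. (f x)^2 + (g x)^2) summable_on A" using fs gs by (rule summable_on_add)
  then show s: "(\<lambda>x. f x * g x) summable_on A"
  proof (rule summable_on_comparison_test)
    fix x
    show "0 \<le> f x * g x" using f0 g0 by simp
    have "2 * (f x * g x) \<le> (f x)^2 + (g x)^2"
      using sum_squares_bound[of "f x" "g x"] by (simp add: mult.assoc)
    then show "f x * g x \<le> (f x)^2 + (g x)^2"
      using mult_nonneg_nonneg[OF f0 g0, of x x] by linarith
  qed
  define P where "P = infsum (\<lambda>x. (f x)^2) A"
  define Q where "Q = infsum (\<lambda>x. (g x)^2) A"
  have PQ: "0 \<le> P * Q" unfolding P_def Q_def by (intro mult_nonneg_nonneg infsum_nonneg) auto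
  have "infsum (\<lambda>x. f x * g x) A \<le> sqrt (P * Q)"
  proof (rule infsum_le_finite_sums[OF s])
    fix F assume F: "finite F" "F \<subseteq> A"
    have "(\<Sum>x\<in>F. f x * g x)^2 \<le> (\<Sum>x\<in>F. (f x)^2) * (\<Sum>x\<in>F. (g x)^2)"
      by (rule Cauchy_Schwarz_ineq_sum)
    also have "\<dots> \<le> P * Q"
      unfolding P_def Q_def
      by (intro mult_mono finite_sum_le_infsum fs gs F infsum_nonneg sum_nonneg) auto
    finally show "(\<Sum>x\<in>F. f x * g x) \<le> sqrt (P * Q)" by (rule real_le_rsqrt)
  qed
  moreover have "0 \<le> infsum (\<lambda>x. f x * g x) A" by (rule infsum_nonneg) (simp add: f0 g0)
  ultimately have "(infsum (\<lambda>x. f x * g x) A)^2 \<le> (sqrt (P * Q))^2" by (intro power_mono)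
  then show "(infsum (\<lambda>x. f x * g x) A)^2 \<le> P * Q" using PQ by simp
qed

lemma summable_on_reflect:
  "f summable_on UNIV \<Longrightarrow> (\<lambda>p. f (m - p)) summable_on (UNIV :: 'a::ab_group_add set)"
  using summable_on_reindex_bij_betw[of "\<lambda>p. m - p" UNIV UNIV f]
  by (simp add: bij_betw_def inj_on_def surj_def)

lemma infsum_reflect: "infsum (\<lambda>p. f (m - p)) (UNIV :: 'a::ab_group_add set) = infsum f UNIV"
  using infsum_reindex_bij_betw[of "\<lambda>p. m - p" UNIV UNIV f]
  by (simp add: bij_betw_def inj_on_def surj_def)

lemma has_sum_sum_fun:
  fixes f :: "'i \<Rightarrow> 'a \<Rightarrow> 'b::topological_comm_monoid_add"
  assumes "finite M" and "\<And>m. m \<in> M \<Longrightarrow> (f m has_sum s m) A"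
  shows "((\<lambda>x. \<Sum>m\<in>M. f m x) has_sum (\<Sum>m\<in>M. s m)) A"
  using assms
proof (induction M rule: finite_induct)
  case (insert x M)
  then have "((\<lambda>y. f x y + (\<Sum>m\<in>M. f m y)) has_sum (s x + (\<Sum>m\<in>M. s m))) A"
    by (intro has_sum_add) auto
  with insert.hyps show ?case by simp
qed simp

lemma norm_scaleR_complex_vec: "norm (c *s (x::complex^'d::finite)) = cmod c * norm x"
  by (simp add: norm_vec_def L2_set_def norm_mult power_mult_distrib
      sum_distrib_left[symmetric] real_sqrt_mult)

lemma cmod_real_dot_le:
  fixes k :: "real^'d::finite" and w :: "complex^'d"
  shows "cmod (\<Sum>j\<in>UNIV. complex_of_real (k$j) * w$j) \<le> norm k * norm w"
proof -
  have "cmod (\<Sum>j\<in>UNIV. complex_of_real (k$j) * w$j) \<le> (\<Sum>j\<in>UNIV. \<bar>k$j\<bar> * norm (w$j))"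
    by (rule order_trans[OF norm_sum]) (simp add: norm_mult)
  also have "\<dots> \<le> L2_set (\<lambda>j. k$j) UNIV * L2_set (\<lambda>j. norm (w$j)) UNIV"
    using L2_set_mult_ineq[of "\<lambda>j. k$j" "\<lambda>j. norm (w$j)" UNIV] by simp
  also have "L2_set (\<lambda>j. k$j) UNIV = norm k"
    by (simp add: norm_vec_def L2_set_def)
  finally show ?thesis by (simp add: norm_vec_def)
qed

text \<open>The constant 2 is crude (\<^const>\<open>leray\<close> is an orthogonal projection) but suffices.\<close>
lemma norm_leray_le:
  assumes box: "\<forall>j. L$j > 0"
  shows "norm (leray L w m) \<le> 2 * norm (w m)"
proof (cases "m = 0")
  case False
  define k where "k = kvec L m"
  define s where "s = (\<Sum>j\<in>UNIV. complex_of_real (k$j) * w m $ j)"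
  have k: "norm k > 0" using wavenum_pos[OF box False] by (simp add: wavenum_def k_def)
  have kc: "norm (\<chi> j. complex_of_real (k$j)) = norm k" by (simp add: norm_vec_def)
  have "norm (leray L w m) \<le> norm (w m) + norm ((s / complex_of_real ((norm k)^2)) *s (\<chi> j. complex_of_real (k$j)))"
    using False by (simp add: leray_def s_def k_def stokes_eig_def norm_triangle_ineq4)
  also have "norm ((s / complex_of_real ((norm k)^2)) *s (\<chi> j. complex_of_real (k$j))) = cmod s / norm k"
    using k by (simp add: norm_scaleR_complex_vec norm_divide norm_power kc flip: of_real_power)
      (simp add: power2_eq_square)
  also have "\<dots> \<le> norm (w m)"
    using cmod_real_dot_le[of k "w m"] k by (simp add: s_def divide_le_eq mult.commute)
  finally show ?thesis by simp
qed (simp add: leray_def)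

lemma norm_convec_term_le:
  fixes u v :: "complex^'d::finite" and k :: "real^'d"
  shows "norm ((\<Sum>j\<in>UNIV. u$j * (\<i> * complex_of_real (k$j))) *s v) \<le> norm u * norm k * norm v"
proof -
  have "(\<Sum>j\<in>UNIV. u$j * (\<i> * complex_of_real (k$j))) = \<i> * (\<Sum>j\<in>UNIV. complex_of_real (k$j) * u$j)"
    by (simp add: sum_distrib_left algebra_simps)
  then have "cmod (\<Sum>j\<in>UNIV. u$j * (\<i> * complex_of_real (k$j))) \<le> norm u * norm k"
    using cmod_real_dot_le[of k u] by (simp add: norm_mult mult.commute)
  then show ?thesis
    by (simp add: norm_scaleR_complex_vec mult_right_mono)
qed

text \<open>Half-integer powers of \<open>|k\<^sub>m|\<close> are integer powers of \<open>\<surd>|k\<^sub>m|\<close>; in particular the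
  \<open>H\<^sup>3\<^sup>/\<^sup>4\<close> weight \<open>\<lambda>\<^sub>m\<^sup>3\<^sup>/\<^sup>4\<close> is its cube.\<close>
definition sqrt_wavenum :: "real^'d::finite \<Rightarrow> int^'d \<Rightarrow> real" where
  "sqrt_wavenum L m = sqrt (wavenum L m)"

lemma sqrt_wavenum_nonneg [simp]: "sqrt_wavenum L m \<ge> 0"
  by (simp add: sqrt_wavenum_def)

lemma sqrt_wavenum_zero [simp]: "sqrt_wavenum L 0 = 0"
  by (simp add: sqrt_wavenum_def)

lemma wavenum_eq_sqrt_wavenum: "wavenum L m = (sqrt_wavenum L m)^2"
  by (simp add: sqrt_wavenum_def)

lemma stokes_eig_eq_sqrt_wavenum: "stokes_eig L m = (sqrt_wavenum L m)^4"
  by (simp add: stokes_eig_eq_wavenum wavenum_eq_sqrt_wavenum flip: power_mult)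

lemma sqrt_wavenum_ge: "\<forall>j. L$j > 0 \<Longrightarrow> m \<noteq> 0 \<Longrightarrow> sqrt_wavenum L m \<ge> sqrt (kmin L)"
  unfolding sqrt_wavenum_def using wavenum_ge_kmin by simp

lemma sqrt_wavenum_pos: "\<forall>j. L$j > 0 \<Longrightarrow> m \<noteq> 0 \<Longrightarrow> sqrt_wavenum L m > 0"
  using wavenum_pos by (simp add: sqrt_wavenum_def)

lemma sqrt_wavenum_triangle: "sqrt_wavenum L q \<le> sqrt_wavenum L m + sqrt_wavenum L (m - q)"
proof -
  have "sqrt_wavenum L q \<le> sqrt (wavenum L m + wavenum L (m - q))"
    unfolding sqrt_wavenum_def using wavenum_triangle by simp
  also have "\<dots> \<le> sqrt_wavenum L m + sqrt_wavenum L (m - q)"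
    unfolding sqrt_wavenum_def by (rule sqrt_add_le_add_sqrt) auto
  finally show ?thesis .
qed

lemma in_Hdot_three_quarters_iff:
  "in_Hdot (3/4) L w \<longleftrightarrow> w 0 = 0 \<and> (\<lambda>m. (sqrt_wavenum L m)^3 * (norm (w m))^2) summable_on UNIV"
proof -
  have "stokes_eig L m powr (3/4) = (sqrt_wavenum L m)^3" for m
  proof (cases "sqrt_wavenum L m = 0")
    case False
    then have q: "sqrt_wavenum L m > 0" using sqrt_wavenum_nonneg[of L m] by linarith
    then have "stokes_eig L m = sqrt_wavenum L m powr 4"
      by (simp add: stokes_eig_eq_sqrt_wavenum powr_realpow)
    then have "stokes_eig L m powr (3/4) = sqrt_wavenum L m powr (4 * (3/4))"
      by (simp only: powr_powr)
    then show ?thesis using q by (simp add: powr_realpow)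
  qed (simp add: stokes_eig_eq_sqrt_wavenum)
  then show ?thesis by (simp add: in_Hdot_def)
qed

lemma summable_inverse_sqrt_wavenum_pow7:
  fixes L :: "real^'d::finite"
  assumes box: "\<forall>j. L$j > 0" and dim: "CARD('d) \<le> 3"
  shows "(\<lambda>m. 1 / (sqrt_wavenum L m)^7) summable_on UNIV"
proof -
  have "wavenum L m powr (-(7/2)) = 1 / (sqrt_wavenum L m)^7" for m
  proof (cases "m = 0")
    case False
    have "wavenum L m powr (-(7/2)) = sqrt_wavenum L m powr (-7)"
      by (simp add: wavenum_eq_sqrt_wavenum sq_powr)
    also have "\<dots> = 1 / sqrt_wavenum L m powr 7"
      by (simp add: powr_minus_divide)
    also have "\<dots> = 1 / (sqrt_wavenum L m)^7"
      using sqrt_wavenum_pos[OF box False] by (simp add: powr_realpow)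
    finally show ?thesis .
  qed simp
  moreover have "(\<lambda>m. wavenum L m powr (-(7/2))) summable_on UNIV"
    using dim by (intro summable_wavenum_powr[OF box]) simp
  ultimately show ?thesis by simp
qed

lemma convolution_weight_split:
  fixes x y z :: real
  assumes x: "x > 0" and y: "y > 0" and z: "0 \<le> z" "z \<le> x + y"
  shows "z / (y^3 * x^5) \<le> 2 * (1 / x^7 + 1 / y^7)"
proof (cases "x \<le> y")
  case True
  have "z / (y^3 * x^5) \<le> (2*y) / (y^3 * x^5)"
    using z True x y by (intro divide_right_mono) auto
  also have "\<dots> = 2 / (y^2 * x^5)" using y by (simp add: power2_eq_square power3_eq_cube)
  also have "\<dots> \<le> 2 / (x^2 * x^5)"
    using True x y by (intro divide_left_mono mult_right_mono power_mono mult_pos_pos) auto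
  also have "\<dots> = 2 / x^7" by (simp flip: power_add)
  also have "\<dots> \<le> 2 * (1 / x^7 + 1 / y^7)" using y by simp
  finally show ?thesis .
next
  case False
  have "z / (y^3 * x^5) \<le> (2*x) / (y^3 * x^5)"
    using z False x y by (intro divide_right_mono) auto
  also have "\<dots> = 2 / (y^3 * x^4)"
  proof -
    have "x^5 = x * x^4" by (simp add: power_Suc[symmetric] del: power_Suc)
    then show ?thesis using x y by simp
  qed
  also have "\<dots> \<le> 2 / (y^3 * y^4)"
    using False x y by (intro divide_left_mono mult_left_mono power_mono mult_pos_pos) auto
  also have "\<dots> = 2 / y^7" by (simp flip: power_add)
  also have "\<dots> \<le> 2 * (1 / x^7 + 1 / y^7)" using x by simp
  finally show ?thesis .
qed

lemma shifted_weight_le: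
  fixes a b c q :: real
  assumes "0 \<le> a" "0 < q" "q \<le> b" "0 \<le> c" "a \<le> c + b"
  shows "a^4 / b^3 \<le> (c / q^3 + 1 / q^2) * a^3"
proof -
  have b: "b > 0" using assms by linarith
  have "a / b^3 \<le> (c + b) / b^3" using assms b by (intro divide_right_mono) auto
  also have "\<dots> = c / b^3 + 1 / b^2" using b by (simp add: add_divide_distrib power2_eq_square power3_eq_cube)
  also have "\<dots> \<le> c / q^3 + 1 / q^2"
    using assms b by (intro add_mono divide_left_mono power_mono mult_pos_pos) auto
  finally have "a / b^3 * a^3 \<le> (c / q^3 + 1 / q^2) * a^3"
    using assms by (intro mult_right_mono) auto
  moreover have "a^4 = a * a^3" by (simp add: power_Suc[symmetric] del: power_Suc)
  ultimately show ?thesis by simp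
qed

text \<open>With \<open>q\<^sub>m = \<surd>|k\<^sub>m|\<close>: Cauchy--Schwarz bounds the convolution at mode \<open>m\<close> by
  \<open>\<parallel>u\<parallel>\<^sub>3\<^sub>/\<^sub>4\<^sup>2 B\<^sub>m\<close>, where \<open>B\<^sub>m = \<Sum>\<^sub>p |v\<^sub>m\<^sub>-\<^sub>p|\<^sup>2 q\<^sub>m\<^sub>-\<^sub>p\<^sup>4 / q\<^sub>p\<^sup>3\<close>, and
  \<open>\<Sum>\<^sub>m B\<^sub>m / q\<^sub>m\<^sup>5\<close> is controlled by the lattice sum \<open>\<Sum>\<^sub>m q\<^sub>m\<^sup>-\<^sup>7\<close>, finite for \<open>d \<le> 3\<close>.\<close>
context
  fixes L :: "real^'d::finite" and u v :: "'d field"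
  assumes box: "\<forall>j. L$j > 0" and dim: "CARD('d) \<le> 3"
    and u: "in_Hdot (3/4) L u" and v: "in_Hdot (3/4) L v"
begin

private abbreviation (input) q where "q \<equiv> sqrt_wavenum L"

private lemma u_summable: "(\<lambda>m. (q m)^3 * (norm (u m))^2) summable_on UNIV"
  and v_summable: "(\<lambda>m. (q m)^3 * (norm (v m))^2) summable_on UNIV"
  using u v by (simp_all add: in_Hdot_three_quarters_iff)

lemma summable_convolution_weight:
  "(\<lambda>p. (norm (v (m - p)))^2 * (q (m - p))^4 / (q p)^3) summable_on UNIV"
proof -
  define q0 where "q0 = sqrt (kmin L)"
  have q0: "q0 > 0" using kmin_pos[OF box] by (simp add: q0_def)
  define C where "C = q m / q0^3 + 1 / q0^2"
  have "(\<lambda>p. C * ((q (m - p))^3 * (norm (v (m - p)))^2)) summable_on UNIV"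
    by (intro summable_on_cmult_right summable_on_reflect[OF v_summable])
  then show ?thesis
  proof (rule summable_on_comparison_test)
    fix p
    show "(norm (v (m - p)))^2 * (q (m - p))^4 / (q p)^3 \<le> C * ((q (m - p))^3 * (norm (v (m - p)))^2)"
    proof (cases "p = 0")
      case False
      have "(q (m - p))^4 / (q p)^3 \<le> C * (q (m - p))^3"
        unfolding C_def
        using q0 sqrt_wavenum_ge[OF box False] sqrt_wavenum_triangle[of L "m - p" m]
        by (intro shifted_weight_le) (auto simp: q0_def)
      then have "(norm (v (m - p)))^2 * ((q (m - p))^4 / (q p)^3)
          \<le> (norm (v (m - p)))^2 * (C * (q (m - p))^3)"
        by (rule mult_left_mono) simp
      then show ?thesis by (simp add: mult_ac)
    qed (use q0 in \<open>auto simp: C_def intro!: mult_nonneg_nonneg add_nonneg_nonneg\<close>)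
  qed simp
qed

lemma convolution_Cauchy_Schwarz:
  "(\<lambda>p. norm (u p) * wavenum L (m - p) * norm (v (m - p))) summable_on UNIV \<and>
   (infsum (\<lambda>p. norm (u p) * wavenum L (m - p) * norm (v (m - p))) UNIV)^2
     \<le> infsum (\<lambda>p. (q p)^3 * (norm (u p))^2) UNIV *
       infsum (\<lambda>p. (norm (v (m - p)))^2 * (q (m - p))^4 / (q p)^3) UNIV"
proof -
  define f where "f p = sqrt ((q p)^3) * norm (u p)" for p
  define g where "g p = norm (v (m - p)) * (q (m - p))^2 / sqrt ((q p)^3)" for p
  have f2: "(f p)^2 = (q p)^3 * (norm (u p))^2" for p
    by (simp add: f_def power_mult_distrib)
  have g2: "(g p)^2 = (norm (v (m - p)))^2 * (q (m - p))^4 / (q p)^3" for p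
    by (simp add: g_def power_mult_distrib power_divide flip: power_mult)
  have fg: "f p * g p = norm (u p) * wavenum L (m - p) * norm (v (m - p))" for p
  proof (cases "p = 0")
    case True then show ?thesis using u by (simp add: f_def g_def in_Hdot_def)
  next
    case False
    then have "sqrt ((q p)^3) > 0" using sqrt_wavenum_pos[OF box False] by simp
    then show ?thesis by (simp add: f_def g_def wavenum_eq_sqrt_wavenum)
  qed
  have f0: "f p \<ge> 0" and g0: "g p \<ge> 0" for p by (simp_all add: f_def g_def)
  have fs: "(\<lambda>p. (f p)^2) summable_on UNIV" unfolding f2 by (rule u_summable)
  have gs: "(\<lambda>p. (g p)^2) summable_on UNIV" unfolding g2 by (rule summable_convolution_weight)
  from infsum_Cauchy_Schwarz[OF f0 g0 fs gs] show ?thesis by (simp add: fg f2 g2)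
qed

lemma norm_convec_le:
  "norm (convec L u v m) \<le> infsum (\<lambda>p. norm (u p) * wavenum L (m - p) * norm (v (m - p))) UNIV"
proof -
  define X where "X p = (\<Sum>j\<in>UNIV. u p $ j * (\<i> * complex_of_real (kvec L (m - p) $ j))) *s v (m - p)" for p
  have bound: "norm (X p) \<le> norm (u p) * wavenum L (m - p) * norm (v (m - p))" for p
    unfolding X_def wavenum_def by (rule norm_convec_term_le)
  have S: "(\<lambda>p. norm (u p) * wavenum L (m - p) * norm (v (m - p))) summable_on UNIV"
    using convolution_Cauchy_Schwarz by blast
  have N: "(\<lambda>p. norm (X p)) summable_on UNIV"
    by (rule summable_on_comparison_test[OF S]) (auto simp: bound)
  have "norm (convec L u v m) \<le> infsum (\<lambda>p. norm (X p)) UNIV"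
    unfolding convec_def X_def[symmetric] by (rule norm_infsum_bound) (use N in simp)
  also have "\<dots> \<le> infsum (\<lambda>p. norm (u p) * wavenum L (m - p) * norm (v (m - p))) UNIV"
    by (rule infsum_mono[OF N S bound])
  finally show ?thesis .
qed

lemma sum_convolution_weight_le:
  assumes M: "finite M"
  shows "(\<Sum>m\<in>M. infsum (\<lambda>p. (norm (v (m - p)))^2 * (q (m - p))^4 / (q p)^3) UNIV / (q m)^5)
    \<le> 4 * infsum (\<lambda>m. 1 / (q m)^7) UNIV * infsum (\<lambda>p. (q p)^3 * (norm (v p))^2) UNIV"
proof -
  define Z where "Z = infsum (\<lambda>m. 1 / (q m)^7) UNIV"
  have Zs: "(\<lambda>m. 1 / (q m)^7) summable_on UNIV"
    by (rule summable_inverse_sqrt_wavenum_pow7[OF box dim])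
  define h where "h m p = (norm (v p))^2 * (q p)^4 / (q (m - p))^3" for m p
  define H where "H m p = h m p / (q m)^5" for m p
  have H: "(H m has_sum infsum (\<lambda>p. (norm (v (m - p)))^2 * (q (m - p))^4 / (q p)^3) UNIV / (q m)^5) UNIV"
    for m
  proof -
    have "h m summable_on UNIV"
      using summable_on_reflect[OF summable_convolution_weight[of m], of m] by (simp add: h_def[abs_def])
    then have "(H m has_sum infsum (h m) UNIV / (q m)^5) UNIV"
      unfolding H_def by (intro has_sum_divide_const has_sum_infsum)
    moreover have "infsum (h m) UNIV = infsum (\<lambda>p. (norm (v (m - p)))^2 * (q (m - p))^4 / (q p)^3) UNIV"
      using infsum_reflect[of "h m" m] by (simp add: h_def)
    ultimately show ?thesis by simp
  qed
  have pointwise: "(\<Sum>m\<in>M. H m p) \<le> (4 * Z) * ((q p)^3 * (norm (v p))^2)" for p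
  proof (cases "p = 0")
    case True then show ?thesis using v by (simp add: H_def h_def in_Hdot_def)
  next
    case False
    have "(\<Sum>m\<in>M. q p / ((q (m - p))^3 * (q m)^5)) \<le> (\<Sum>m\<in>M. 2 * (1 / (q m)^7 + 1 / (q (m - p))^7))"
    proof (rule sum_mono)
      fix m
      show "q p / ((q (m - p))^3 * (q m)^5) \<le> 2 * (1 / (q m)^7 + 1 / (q (m - p))^7)"
      proof (cases "m = 0 \<or> m = p")
        case False
        then have "m \<noteq> 0" "m - p \<noteq> 0" by auto
        then show ?thesis
          by (intro convolution_weight_split sqrt_wavenum_pos[OF box] sqrt_wavenum_triangle sqrt_wavenum_nonneg)
      qed auto
    qed
    also have "\<dots> = 2 * ((\<Sum>m\<in>M. 1 / (q m)^7) + (\<Sum>m\<in>(\<lambda>m. m - p) ` M. 1 / (q m)^7))"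
      by (simp add: sum.distrib sum_distrib_left sum.reindex inj_on_def)
    also have "\<dots> \<le> 2 * (Z + Z)"
      unfolding Z_def using M by (intro mult_left_mono add_mono finite_sum_le_infsum[OF Zs]) auto
    finally have "(\<Sum>m\<in>M. q p / ((q (m - p))^3 * (q m)^5)) \<le> 4 * Z" by simp
    then have "((q p)^3 * (norm (v p))^2) * (\<Sum>m\<in>M. q p / ((q (m - p))^3 * (q m)^5))
        \<le> ((q p)^3 * (norm (v p))^2) * (4 * Z)"
      by (rule mult_left_mono) simp
    moreover have "(\<Sum>m\<in>M. H m p) = ((q p)^3 * (norm (v p))^2) * (\<Sum>m\<in>M. q p / ((q (m - p))^3 * (q m)^5))"
    proof -
      have "(q p)^4 = q p * (q p)^3" by (simp add: power_Suc[symmetric] del: power_Suc)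
      then show ?thesis unfolding sum_distrib_left
        by (intro sum.cong) (simp_all add: H_def h_def field_simps)
    qed
    ultimately show ?thesis by (simp add: mult.commute)
  qed
  have "((\<lambda>p. \<Sum>m\<in>M. H m p) has_sum
      (\<Sum>m\<in>M. infsum (\<lambda>p. (norm (v (m - p)))^2 * (q (m - p))^4 / (q p)^3) UNIV / (q m)^5)) UNIV"
    using M H by (rule has_sum_sum_fun)
  moreover have "((\<lambda>p. (4 * Z) * ((q p)^3 * (norm (v p))^2)) has_sum
      (4 * Z * infsum (\<lambda>p. (q p)^3 * (norm (v p))^2) UNIV)) UNIV"
    by (intro has_sum_cmult_right has_sum_infsum v_summable)
  ultimately show ?thesis
    unfolding Z_def[symmetric] by (rule has_sum_mono[OF _ _ pointwise])
qed

lemma in_Hdot_phi1_Bop: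
  assumes a: "a > 0"
  shows "in_Hdot (3/4) L (specop L (\<lambda>x. phi1 (a * x)) (Bop L u v))"
proof -
  define g where "g = specop L (\<lambda>x. phi1 (a * x)) (Bop L u v)"
  define A where "A = infsum (\<lambda>p. (q p)^3 * (norm (u p))^2) UNIV"
  define B where "B m = infsum (\<lambda>p. (norm (v (m - p)))^2 * (q (m - p))^4 / (q p)^3) UNIV" for m
  define S where "S m = infsum (\<lambda>p. norm (u p) * wavenum L (m - p) * norm (v (m - p))) UNIV" for m
  have A0: "A \<ge> 0" unfolding A_def by (rule infsum_nonneg) auto
  have B0: "B m \<ge> 0" for m unfolding B_def by (rule infsum_nonneg) auto
  have S0: "S m \<ge> 0" for m unfolding S_def by (rule infsum_nonneg) auto
  have g0: "g 0 = 0" by (simp add: g_def specop_def Bop_def leray_def)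
  have mode: "(q m)^3 * (norm (g m))^2 \<le> (4 * A / a^2) * (B m / (q m)^5)" for m
  proof (cases "m = 0")
    case False
    define qm where "qm = q m"
    have qm: "qm > 0" using sqrt_wavenum_pos[OF box False] by (simp add: qm_def)
    have aq: "a * qm^4 > 0" using a qm by simp
    have "norm (g m) = phi1 (a * qm^4) * norm (leray L (convec L u v) m)"
      using phi1_nonneg[of "a * qm^4"] aq
      by (simp add: g_def specop_def Bop_def stokes_eig_eq_sqrt_wavenum qm_def)
    also have "\<dots> \<le> (1 / (a * qm^4)) * (2 * S m)"
      using phi1_le_inverse[OF aq] phi1_nonneg[of "a * qm^4"] aq
        norm_leray_le[OF box, of "convec L u v" m] norm_convec_le[of m]
      by (intro mult_mono) (auto simp: S_def)
    finally have "qm^3 * (norm (g m))^2 \<le> qm^3 * ((1 / (a * qm^4)) * (2 * S m))^2"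
      using qm by (intro mult_left_mono power_mono) auto
    also have "\<dots> = (4 / a^2) * (S m)^2 / qm^5"
    proof -
      have "qm^8 = qm^3 * qm^5" by (simp flip: power_add)
      then show ?thesis using qm a by (simp add: power_mult_distrib field_simps flip: power_mult)
    qed
    also have "\<dots> \<le> (4 / a^2) * (A * B m) / qm^5"
      using convolution_Cauchy_Schwarz[of m] qm a
      by (intro divide_right_mono mult_left_mono) (auto simp: S_def A_def B_def)
    finally show ?thesis by (simp add: qm_def)
  qed (simp add: g0)
  have "(\<lambda>m. B m / (q m)^5) summable_on UNIV"
  proof (rule nonneg_bdd_above_summable_on)
    show "bdd_above (sum (\<lambda>m. B m / (q m)^5) ` {M. M \<subseteq> UNIV \<and> finite M})"
      using sum_convolution_weight_le unfolding B_def by (intro bdd_aboveI2) auto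
  qed (simp add: B0)
  then have "(\<lambda>m. (4 * A / a^2) * (B m / (q m)^5)) summable_on UNIV"
    by (rule summable_on_cmult_right)
  then have "(\<lambda>m. (q m)^3 * (norm (g m))^2) summable_on UNIV"
    by (rule summable_on_comparison_test) (use mode in simp_all)
  then show ?thesis
    using g0 by (simp add: in_Hdot_three_quarters_iff g_def)
qed

end

section \<open>Energy estimate\<close>

lemma vol_pos: "\<forall>j. L$j > 0 \<Longrightarrow> vol L > 0"
  unfolding vol_def by (rule prod_pos) auto

lemma l2norm_sq_nonneg:
  assumes "\<forall>j. L$j > 0"
  shows "l2norm_sq L w \<ge> 0"
  unfolding l2norm_sq_def using vol_pos[OF assms] by (intro mult_nonneg_nonneg infsum_nonneg) auto

definition mode_inner :: "'d::finite field \<Rightarrow> 'd field \<Rightarrow> int^'d \<Rightarrow> complex" where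
  "mode_inner f v m = (\<Sum>j\<in>UNIV. f m $ j * cnj (v m $ j))"

lemma norm_mode_inner_le: "cmod (mode_inner f v m) \<le> norm (f m) * norm (v m)"
proof -
  have "cmod (mode_inner f v m) \<le> (\<Sum>j\<in>UNIV. norm (f m $ j) * norm (v m $ j))"
    unfolding mode_inner_def by (rule order_trans[OF norm_sum]) (simp add: norm_mult)
  also have "\<dots> \<le> L2_set (\<lambda>j. norm (f m $ j)) UNIV * L2_set (\<lambda>j. norm (v m $ j)) UNIV"
    using L2_set_mult_ineq[of "\<lambda>j. norm (f m $ j)" "\<lambda>j. norm (v m $ j)" UNIV] by simp
  also have "\<dots> = norm (f m) * norm (v m)" by (simp add: norm_vec_def)
  finally show ?thesis .
qed

lemma mode_inner_self: "mode_inner f f m = complex_of_real ((norm (f m))^2)"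
  unfolding mode_inner_def norm_vec_def L2_set_def
  by (simp add: sum_nonneg complex_norm_square[symmetric])

lemma mode_inner_diff_scaleR_left:
  "mode_inner (\<lambda>m. W m - c *\<^sub>R G m) U m = mode_inner W U m - complex_of_real c * mode_inner G U m"
  unfolding mode_inner_def vector_minus_component vector_scaleR_component
  by (simp add: scaleR_conv_of_real sum_subtractf sum_distrib_left algebra_simps)

lemma norm_mode_inner_le_half_sum:
  "2 * cmod (mode_inner f v m) \<le> (norm (f m))^2 + (norm (v m))^2"
proof -
  have "2 * cmod (mode_inner f v m) \<le> 2 * norm (f m) * norm (v m)"
    using norm_mode_inner_le[of f v m] by simp
  then show ?thesis using sum_squares_bound[of "norm (f m)" "norm (v m)"] by linarith
qed

lemma summable_on_mode_inner:
  assumes f: "square_summable f" and v: "square_summable v"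
  shows "mode_inner f v summable_on UNIV"
proof (rule abs_summable_summable)
  have "(\<lambda>m. (norm (f m))^2 + (norm (v m))^2) summable_on UNIV"
    using f v unfolding square_summable_def by (rule summable_on_add)
  then show "(\<lambda>m. norm (mode_inner f v m)) summable_on UNIV"
  proof (rule summable_on_comparison_test)
    fix m
    show "norm (mode_inner f v m) \<le> (norm (f m))^2 + (norm (v m))^2"
      using norm_mode_inner_le_half_sum[of f v m] norm_ge_zero[of "mode_inner f v m"] by linarith
  qed simp
qed

lemma l2inner_eq_Re_infsum: "l2inner L f v = vol L * Re (infsum (mode_inner f v) UNIV)"
  by (simp add: l2inner_def mode_inner_def[abs_def])

lemma l2inner_eq_infsum:
  assumes "square_summable f" "square_summable v"
  shows "l2inner L f v = vol L * infsum (\<lambda>m. Re (mode_inner f v m)) UNIV"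
  unfolding l2inner_eq_Re_infsum using infsum_Re[OF summable_on_mode_inner[OF assms]] by simp

lemma l2inner_self: "square_summable U \<Longrightarrow> l2inner L U U = l2norm_sq L U"
  by (simp add: l2inner_eq_infsum l2norm_sq_def mode_inner_self)

lemma l2inner_diff_scaleR_left:
  assumes W: "square_summable W" and G: "square_summable G" and U: "square_summable U"
  shows "l2inner L (\<lambda>m. W m - c *\<^sub>R G m) U = l2inner L W U - c * l2inner L G U"
proof -
  have "((\<lambda>m. mode_inner W U m + (- complex_of_real c) * mode_inner G U m) has_sum
      (infsum (mode_inner W U) UNIV + (- complex_of_real c) * infsum (mode_inner G U) UNIV)) UNIV"
    by (intro has_sum_add has_sum_cmult_right has_sum_infsum summable_on_mode_inner W G U)
  moreover have "mode_inner (\<lambda>m. W m - c *\<^sub>R G m) U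
      = (\<lambda>m. mode_inner W U m + (- complex_of_real c) * mode_inner G U m)"
    by (simp add: fun_eq_iff mode_inner_diff_scaleR_left)
  ultimately have "infsum (mode_inner (\<lambda>m. W m - c *\<^sub>R G m) U) UNIV
      = infsum (mode_inner W U) UNIV - complex_of_real c * infsum (mode_inner G U) UNIV"
    using infsumI by fastforce
  then have "Re (infsum (mode_inner (\<lambda>m. W m - c *\<^sub>R G m) U) UNIV)
      = Re (infsum (mode_inner W U) UNIV) - c * Re (infsum (mode_inner G U) UNIV)"
    by simp
  then show ?thesis by (simp add: l2inner_eq_Re_infsum right_diff_distrib)
qed

lemma l2inner_le_half_sum:
  assumes box: "\<forall>j. L$j > 0" and W: "square_summable W" and U: "square_summable U"
  shows "2 * l2inner L W U \<le> l2norm_sq L W + l2norm_sq L U"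
proof -
  have "infsum (\<lambda>m. 2 * Re (mode_inner W U m)) UNIV
      \<le> infsum (\<lambda>m. (norm (W m))^2 + (norm (U m))^2) UNIV"
  proof (rule infsum_mono)
    show "(\<lambda>m. 2 * Re (mode_inner W U m)) summable_on UNIV"
      by (intro summable_on_cmult_right summable_on_Re summable_on_mode_inner W U)
    show "(\<lambda>m. (norm (W m))^2 + (norm (U m))^2) summable_on UNIV"
      using W U unfolding square_summable_def by (rule summable_on_add)
    show "2 * Re (mode_inner W U m) \<le> (norm (W m))^2 + (norm (U m))^2" for m
      using norm_mode_inner_le_half_sum[of W U m] complex_Re_le_cmod[of "mode_inner W U m"] by linarith
  qed
  then have "2 * infsum (\<lambda>m. Re (mode_inner W U m)) UNIV
      \<le> infsum (\<lambda>m. (norm (W m))^2) UNIV + infsum (\<lambda>m. (norm (U m))^2) UNIV"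
    using W U unfolding square_summable_def
    by (simp add: infsum_cmult_right' infsum_add)
  then show ?thesis
    using vol_pos[OF box] W U
    by (simp add: l2inner_eq_infsum l2norm_sq_def flip: distrib_left mult.assoc)
qed

lemma phi1_antimono:
  assumes "0 < x" "x \<le> y"
  shows "phi1 y \<le> phi1 x"
proof -
  define t where "t = x / y"
  have y: "y > 0" and t0: "0 \<le> t" and t1: "t \<le> 1" using assms by (auto simp: t_def)
  have "exp ((1 - t) *\<^sub>R 0 + t *\<^sub>R (-y)) \<le> (1 - t) * exp 0 + t * exp (-y)"
    by (rule convex_onD[OF exp_convex t0 t1]) auto
  moreover have "(1 - t) *\<^sub>R 0 + t *\<^sub>R (-y) = -x" using y by (simp add: t_def)
  ultimately have "t * (1 - exp (-y)) \<le> 1 - exp (-x)" by (simp add: algebra_simps)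
  then show ?thesis using assms y by (simp add: phi1_def t_def field_simps)
qed

text \<open>Relaxation at rate \<open>\<mu> \<ge> \<theta>\<close> towards \<open>Y\<close> is dominated by relaxation at rate \<open>\<theta>\<close>
  towards \<open>(\<mu>/\<theta>) Y\<close>.\<close>
lemma exp_relaxation_le:
  fixes \<theta> \<mu> \<tau> X Y :: real
  assumes \<theta>: "0 < \<theta>" "\<theta> \<le> \<mu>" and \<tau>: "0 < \<tau>" and "0 \<le> X" "0 \<le> Y"
  shows "exp (- (\<tau> * \<mu>)) * X + (1 - exp (- (\<tau> * \<mu>))) * Y
    \<le> exp (- (\<theta> * \<tau>)) * X + (1 - exp (- (\<theta> * \<tau>))) * (\<mu> / \<theta> * Y)"
proof (rule add_mono)
  have "\<theta> * \<tau> \<le> \<tau> * \<mu>" using \<theta> \<tau> by (simp add: mult.commute)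
  then show "exp (- (\<tau> * \<mu>)) * X \<le> exp (- (\<theta> * \<tau>)) * X"
    using \<open>0 \<le> X\<close> by (intro mult_right_mono) auto
  have "phi1 (\<tau> * \<mu>) \<le> phi1 (\<theta> * \<tau>)"
    using \<theta> \<tau> \<open>\<theta> * \<tau> \<le> \<tau> * \<mu>\<close> by (intro phi1_antimono) auto
  then have "(\<tau> * \<mu>) * phi1 (\<tau> * \<mu>) \<le> (\<tau> * \<mu>) * phi1 (\<theta> * \<tau>)"
    using \<theta> \<tau> by (intro mult_left_mono) auto
  moreover have "(\<tau> * \<mu>) * phi1 (\<tau> * \<mu>) = 1 - exp (- (\<tau> * \<mu>))"
    using \<theta> \<tau> by (simp add: phi1_def)
  moreover have "(\<tau> * \<mu>) * phi1 (\<theta> * \<tau>) = (1 - exp (- (\<theta> * \<tau>))) * (\<mu> / \<theta>)"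
    using \<theta> \<tau> by (simp add: phi1_def)
  ultimately have "1 - exp (- (\<tau> * \<mu>)) \<le> (1 - exp (- (\<theta> * \<tau>))) * (\<mu> / \<theta>)"
    by simp
  then have "(1 - exp (- (\<tau> * \<mu>))) * Y \<le> (1 - exp (- (\<theta> * \<tau>))) * (\<mu> / \<theta>) * Y"
    using \<open>0 \<le> Y\<close> by (rule mult_right_mono)
  then show "(1 - exp (- (\<tau> * \<mu>))) * Y \<le> (1 - exp (- (\<theta> * \<tau>))) * (\<mu> / \<theta> * Y)"
    by (simp only: mult.assoc)
qed

lemma square_convex_comb_le:
  fixes p A B :: real
  assumes "0 \<le> p" "p \<le> 1"
  shows "(p * A + (1 - p) * B)^2 \<le> p * A^2 + (1 - p) * B^2"
proof -
  have "p * A^2 + (1 - p) * B^2 - (p * A + (1 - p) * B)^2 = p * (1 - p) * (A - B)^2"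
    by (simp add: power2_eq_square algebra_simps)
  moreover have "0 \<le> p * (1 - p) * (A - B)^2" using assms by simp
  ultimately show ?thesis by linarith
qed

text \<open>On a mode with eigenvalue \<open>\<lambda>\<close> the linear part of the scheme is the exact
  solution operator of \<open>w' + \<nu>\<lambda>w = y\<close> over one step: a convex combination of \<open>x\<close> and
  \<open>y/(\<nu>\<lambda>)\<close> with weight \<open>e\<^sup>-\<^sup>\<tau>\<^sup>\<nu>\<^sup>\<lambda>\<close>.\<close>
lemma linear_part_mode_le:
  fixes x y :: "'a::real_normed_vector"
  assumes \<nu>: "0 < \<nu>" and \<tau>: "0 < \<tau>" and \<theta>: "0 < \<theta>" "\<theta> \<le> \<nu> * l1" and l1: "0 < l1" "l1 \<le> l"
  shows "(norm (phi0 (\<tau> * \<nu> * l) *\<^sub>R x + (\<tau> * phi1 (\<tau> * \<nu> * l)) *\<^sub>R y))^2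
    \<le> exp (- (\<theta> * \<tau>)) * (norm x)^2 + (1 - exp (- (\<theta> * \<tau>))) / (\<theta> * \<nu> * l1) * (norm y)^2"
proof -
  define p where "p = exp (- (\<tau> * (\<nu> * l)))"
  define B where "B = norm y / (\<nu> * l)"
  have l: "\<nu> * l > 0" using \<nu> l1 by simp
  have p0: "0 \<le> p" and p1: "p \<le> 1" using \<tau> l by (auto simp: p_def)
  have "\<tau> * phi1 (\<tau> * \<nu> * l) = (1 - p) / (\<nu> * l)"
    using \<tau> \<nu> l1 by (simp add: phi1_def p_def field_simps)
  then have "norm (phi0 (\<tau> * \<nu> * l) *\<^sub>R x + (\<tau> * phi1 (\<tau> * \<nu> * l)) *\<^sub>R y) \<le> p * norm x + (1 - p) * B"
    using norm_triangle_ineq[of "p *\<^sub>R x" "((1 - p) / (\<nu> * l)) *\<^sub>R y"] p0 p1 l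
    by (simp add: phi0_def p_def B_def mult.assoc)
  then have "(norm (phi0 (\<tau> * \<nu> * l) *\<^sub>R x + (\<tau> * phi1 (\<tau> * \<nu> * l)) *\<^sub>R y))^2 \<le> (p * norm x + (1 - p) * B)^2"
    by (rule power_mono) simp
  also have "\<dots> \<le> p * (norm x)^2 + (1 - p) * B^2"
    by (rule square_convex_comb_le[OF p0 p1])
  also have "\<dots> \<le> exp (- (\<theta> * \<tau>)) * (norm x)^2 + (1 - exp (- (\<theta> * \<tau>))) * (\<nu> * l / \<theta> * B^2)"
    unfolding p_def using \<theta> \<tau> mult_left_mono[OF l1(2) less_imp_le[OF \<nu>]]
    by (intro exp_relaxation_le) simp_all
  also have "\<nu> * l / \<theta> * B^2 = (norm y)^2 / (\<theta> * \<nu> * l)"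
    using l \<theta> by (simp add: B_def power2_eq_square field_simps)
  also have "\<dots> \<le> (norm y)^2 / (\<theta> * \<nu> * l1)"
    using \<theta> \<nu> l1 by (intro divide_left_mono mult_left_mono mult_pos_pos) auto
  finally show ?thesis
    using \<theta> \<tau> by (simp add: mult_left_mono times_divide_eq_left)
qed

lemma l2norm_sq_linear_part_le:
  fixes L :: "real^'d::finite" and uk Fs :: "'d field" and \<nu> \<tau> \<theta> :: real
  defines "W \<equiv> \<lambda>m. specop L (\<lambda>x. phi0 (\<tau> * \<nu> * x)) uk m + \<tau> *\<^sub>R specop L (\<lambda>x. phi1 (\<tau> * \<nu> * x)) Fs m"
    and "q \<equiv> exp (- (\<theta> * \<tau>))"
  assumes box: "\<forall>j. L$j > 0" and \<nu>: "\<nu> > 0" and \<tau>: "\<tau> > 0" and \<theta>: "0 < \<theta>" "\<theta> \<le> \<nu> * lambda1 L"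
    and uk: "square_summable uk" "uk 0 = 0" and Fs: "square_summable Fs" "Fs 0 = 0"
  shows "square_summable W"
    and "l2norm_sq L W \<le> q * l2norm_sq L uk + (1 - q) / (\<theta> * \<nu> * lambda1 L) * l2norm_sq L Fs"
proof -
  define K where "K = (1 - q) / (\<theta> * \<nu> * lambda1 L)"
  have mode: "(norm (W m))^2 \<le> q * (norm (uk m))^2 + K * (norm (Fs m))^2" for m
  proof (cases "m = 0")
    case False
    show ?thesis
      unfolding W_def q_def K_def specop_def scaleR_scaleR
      using lambda1_le_stokes_eig[OF False] lambda1_pos[OF box] \<nu> \<tau> \<theta>
      by (intro linear_part_mode_le) (simp_all add: mult.assoc)
  qed (simp add: W_def specop_def uk Fs)
  have bound: "((\<lambda>m. q * (norm (uk m))^2 + K * (norm (Fs m))^2) has_sum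
      (q * infsum (\<lambda>m. (norm (uk m))^2) UNIV + K * infsum (\<lambda>m. (norm (Fs m))^2) UNIV)) UNIV"
    using uk Fs unfolding square_summable_def
    by (intro has_sum_add has_sum_cmult_right has_sum_infsum)
  then show W: "square_summable W"
    unfolding square_summable_def
    by (rule summable_on_comparison_test[OF has_sum_imp_summable]) (simp_all add: mode)
  have "infsum (\<lambda>m. (norm (W m))^2) UNIV
      \<le> q * infsum (\<lambda>m. (norm (uk m))^2) UNIV + K * infsum (\<lambda>m. (norm (Fs m))^2) UNIV"
    using W bound mode unfolding square_summable_def by (intro has_sum_mono[OF has_sum_infsum]) auto
  then have "vol L * infsum (\<lambda>m. (norm (W m))^2) UNIV
      \<le> vol L * (q * infsum (\<lambda>m. (norm (uk m))^2) UNIV + K * infsum (\<lambda>m. (norm (Fs m))^2) UNIV)"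
    using vol_pos[OF box] by (intro mult_left_mono) auto
  then show "l2norm_sq L W \<le> q * l2norm_sq L uk + K * l2norm_sq L Fs"
    unfolding l2norm_sq_def by (simp add: algebra_simps)
qed

text \<open>The scalar auxiliary variable makes the nonlinear term cancel: the factor
  \<open>1 - r\<^sup>2\<close> in front of \<open>g\<close> turns \<open>\<langle>g, u\<rangle>\<close> into a multiple of the increment of \<open>r\<close>,
  so only \<open>|1 + r|\<^sup>2\<close> is needed to absorb it.\<close>
lemma sav_cancellation:
  fixes NU NW IW G a b e \<tau> :: real
  assumes U: "NU = IW - \<tau> * (1 - a^2) * G" and r: "a = e * b + \<tau> * (1 - a) * G"
    and cross: "2 * IW \<le> NW + NU"
  shows "NU + (1 + a)^2 \<le> NW + (1 + e * b)^2"
proof -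
  have "\<tau> * (1 - a^2) * G = (1 + a) * (\<tau> * (1 - a) * G)"
    by (simp add: power2_eq_square algebra_simps)
  also have "\<dots> = (1 + a) * (a - e * b)" using r by simp
  finally have U': "NU = IW - (1 + a) * (a - e * b)" using U by simp
  have "(1 + a)^2 - 2 * ((1 + a) * (a - e * b)) = 2 * ((1 + a) * (1 + e * b)) - (1 + a)^2"
    by (simp add: power2_eq_square algebra_simps)
  moreover have "2 * ((1 + a) * (1 + e * b)) \<le> (1 + a)^2 + (1 + e * b)^2"
    using sum_squares_bound[of "1 + a" "1 + e * b"] by (simp only: mult.assoc)
  ultimately show ?thesis using U' cross by linarith
qed

lemma sav_energy_step:
  fixes L :: "real^'d::finite" and uk U g Fs :: "'d field" and \<nu> \<tau> \<gamma> \<theta> M a b :: real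
  assumes box: "\<forall>j. L$j > 0" and \<nu>: "\<nu> > 0" and \<tau>: "\<tau> > 0"
    and \<theta>: "0 < \<theta>" "\<theta> \<le> \<nu> * lambda1 L" "\<theta> \<le> \<gamma>"
    and uk: "square_summable uk" "uk 0 = 0"
    and Fs: "square_summable Fs" "Fs 0 = 0" "l2norm_sq L Fs \<le> M^2"
    and U: "square_summable U" and g: "square_summable g"
    and U_eq: "U = (\<lambda>m. specop L (\<lambda>x. phi0 (\<tau> * \<nu> * x)) uk m - (\<tau> * (1 - a^2)) *\<^sub>R g m
                     + \<tau> *\<^sub>R specop L (\<lambda>x. phi1 (\<tau> * \<nu> * x)) Fs m)"
    and r_eq: "a = phi0 (\<tau> * \<gamma>) * b + \<tau> * (1 - a) * l2inner L g U"
  shows "l2norm_sq L U + \<bar>a + 1\<bar>^2 \<le> exp (- (\<theta> * \<tau>)) * (l2norm_sq L uk + \<bar>b + 1\<bar>^2)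
            + (1 - exp (- (\<theta> * \<tau>))) * ((1 / \<theta>) * ((1 / (\<nu> * lambda1 L)) * M^2 + \<gamma>))"
proof -
  define W where "W m = specop L (\<lambda>x. phi0 (\<tau> * \<nu> * x)) uk m + \<tau> *\<^sub>R specop L (\<lambda>x. phi1 (\<tau> * \<nu> * x)) Fs m" for m
  define q where "q = exp (- (\<theta> * \<tau>))"
  define e where "e = phi0 (\<tau> * \<gamma>)"
  have q1: "q \<le> 1" using \<theta> \<tau> by (simp add: q_def)
  have W: "square_summable W"
    and NW: "l2norm_sq L W \<le> q * l2norm_sq L uk + (1 - q) / (\<theta> * \<nu> * lambda1 L) * l2norm_sq L Fs"
    unfolding W_def q_def using l2norm_sq_linear_part_le[OF box \<nu> \<tau> \<theta>(1,2) uk Fs(1,2)] by auto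
  have "U = (\<lambda>m. W m - (\<tau> * (1 - a^2)) *\<^sub>R g m)"
    unfolding U_eq W_def by (simp add: fun_eq_iff algebra_simps)
  then have "l2norm_sq L U = l2inner L W U - \<tau> * (1 - a^2) * l2inner L g U"
    using W g U by (simp add: l2inner_self[symmetric] l2inner_diff_scaleR_left)
  moreover have "2 * l2inner L W U \<le> l2norm_sq L W + l2norm_sq L U"
    by (rule l2inner_le_half_sum[OF box W U])
  ultimately have "l2norm_sq L U + (1 + a)^2 \<le> l2norm_sq L W + (1 + e * b)^2"
    using r_eq unfolding e_def by (intro sav_cancellation) auto
  moreover have "(1 + e * b)^2 \<le> q * (1 + b)^2 + (1 - q) * (\<gamma> / \<theta>)"
  proof -
    have e0: "0 \<le> e" and e1: "e \<le> 1" using \<tau> \<theta> by (simp_all add: e_def phi0_nonneg phi0_le_one)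
    have "(1 + e * b)^2 = (e * (1 + b) + (1 - e) * 1)^2" by (simp add: algebra_simps)
    also have "\<dots> \<le> e * (1 + b)^2 + (1 - e) * 1^2" by (rule square_convex_comb_le[OF e0 e1])
    also have "\<dots> \<le> q * (1 + b)^2 + (1 - q) * (\<gamma> / \<theta> * 1^2)"
      unfolding e_def phi0_def q_def using \<theta> \<tau> by (intro exp_relaxation_le) auto
    finally show ?thesis by simp
  qed
  moreover have "(1 - q) / (\<theta> * \<nu> * lambda1 L) * l2norm_sq L Fs \<le> (1 - q) / (\<theta> * \<nu> * lambda1 L) * M^2"
    using Fs(3) q1 \<theta> \<nu> lambda1_pos[OF box] by (intro mult_left_mono) auto
  ultimately have "l2norm_sq L U + (1 + a)^2
      \<le> q * (l2norm_sq L uk + (1 + b)^2) + (1 - q) * ((1 / \<theta>) * ((1 / (\<nu> * lambda1 L)) * M^2 + \<gamma>))"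
    using NW by (simp add: algebra_simps)
  then show ?thesis by (simp add: q_def add.commute)
qed

lemma exp_recursion_bound:
  fixes E d :: "nat \<Rightarrow> real" and \<theta> K :: real
  assumes rec: "\<And>k. k \<ge> 1 \<Longrightarrow> E (k + 1) \<le> exp (- (\<theta> * d k)) * E k + (1 - exp (- (\<theta> * d k))) * K"
    and n: "n \<ge> 1"
  shows "E (n + 1) \<le> exp (- \<theta> * (\<Sum>i=1..n. d i)) * E 1 + (1 - exp (- \<theta> * (\<Sum>i=1..n. d i))) * K"
  using n
proof (induction n rule: dec_induct)
  case base
  show ?case using rec[of 1] by simp
next
  case (step n)
  define S where "S = (\<Sum>i=1..n. d i)"
  have "E (n + 1 + 1) \<le> exp (- (\<theta> * d (n + 1))) * E (n + 1) + (1 - exp (- (\<theta> * d (n + 1)))) * K"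
    using step.hyps by (intro rec) simp
  also have "\<dots> \<le> exp (- (\<theta> * d (n + 1))) * (exp (- \<theta> * S) * E 1 + (1 - exp (- \<theta> * S)) * K)
      + (1 - exp (- (\<theta> * d (n + 1)))) * K"
    using step.IH by (simp add: S_def)
  also have "\<dots> = exp (- \<theta> * (S + d (n + 1))) * E 1 + (1 - exp (- \<theta> * (S + d (n + 1)))) * K"
    by (simp add: algebra_simps flip: exp_add)
  finally show ?case using step.hyps by (simp add: S_def)
qed

lemma scheme_step_in_Hdot:
  fixes L :: "real^'d::finite"
  assumes box: "\<forall>j. L$j > 0" and dim: "CARD('d) \<le> 3" and \<nu>: "\<nu> > 0" and \<tau>: "\<tau> > 0"
    and u: "in_Hdot (3/4) L u" and w: "in_Hdot (3/4) L w"
    and F: "square_summable F" "F 0 = 0"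
  shows "in_Hdot (3/4) L (\<lambda>m. specop L (\<lambda>x. phi0 (\<tau> * \<nu> * x)) u m
                             - c *\<^sub>R specop L (\<lambda>x. phi1 (\<tau> * \<nu> * x)) (Bop L w w) m
                             + \<tau> *\<^sub>R specop L (\<lambda>x. phi1 (\<tau> * \<nu> * x)) F m)"
proof -
  have "in_Hdot (3/4) L (specop L (\<lambda>x. phi0 (\<tau> * \<nu> * x)) u)"
    using \<tau> \<nu> by (intro in_Hdot_specop[OF u, where C=1]) (simp add: phi0_def)
  moreover have "in_Hdot (3/4) L (specop L (\<lambda>x. phi1 (\<tau> * \<nu> * x)) (Bop L w w))"
    using \<tau> \<nu> in_Hdot_phi1_Bop[OF box dim w w, of "\<tau> * \<nu>"] by (simp add: mult.assoc)
  moreover have "in_Hdot (3/4) L (specop L (\<lambda>x. phi1 (\<tau> * \<nu> * x)) F)"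
    using \<tau> \<nu> in_Hdot_phi1[OF _ _ _ F, of "3/4" "\<tau> * \<nu>" L] by (simp add: mult.assoc)
  ultimately show ?thesis by (intro in_Hdot_add in_Hdot_diff in_Hdot_scaleR)
qed

section \<open>The scheme\<close>

locale etd_sav_ms2 =
  fixes L :: "real^'d::finite"
    and \<nu> \<gamma> \<alpha> :: real
    and F :: "real \<Rightarrow> 'd field"
    and t :: "nat \<Rightarrow> real"
    and u :: "nat \<Rightarrow> 'd field"
    and r :: "nat \<Rightarrow> real"
  assumes dim: "CARD('d) = 2 \<or> CARD('d) = 3"
    and box: "\<forall>j. L $ j > 0"
    and nu: "\<nu> > 0" and gam: "\<gamma> > 0"
    and FH: "\<forall>s\<ge>0. in_H L (F s)"
    and Fbdd: "bdd_above ((\<lambda>s. sqrt (l2norm_sq L (F s))) ` {0..})"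
    and t0: "t 0 = 0"
    and tpos: "\<forall>k\<ge>1. t k - t (k - 1) > 0"
    and alpha: "\<alpha> \<ge> 3/4"
    and init: "\<forall>i\<le>1. in_H L (u i) \<and> in_Hdot \<alpha> L (u i)"
    and scheme: "\<forall>k\<ge>1.
       let \<tau>k = t k - t (k - 1); \<tau> = t (k + 1) - t k;
           ut = (\<lambda>m. ((\<tau> + 2 * \<tau>k) / (2 * \<tau>k)) *\<^sub>R u k m - (\<tau> / (2 * \<tau>k)) *\<^sub>R u (k - 1) m);
           g = specop L (\<lambda>x. phi1 (\<tau> * \<nu> * x)) (Bop L ut ut)
       in u (k + 1) = (\<lambda>m. specop L (\<lambda>x. phi0 (\<tau> * \<nu> * x)) (u k) m
                            - (\<tau> * (1 - (r (k + 1))\<^sup>2)) *\<^sub>R g m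
                            + \<tau> *\<^sub>R specop L (\<lambda>x. phi1 (\<tau> * \<nu> * x)) (F (t k + \<tau> / 2)) m)
        \<and> r (k + 1) = phi0 (\<tau> * \<gamma>) * r k + \<tau> * (1 - r (k + 1)) * l2inner L g (u (k + 1))"
begin

abbreviation (input) step :: "nat \<Rightarrow> real" where
  "step k \<equiv> t (k + 1) - t k"

abbreviation (input) extrapolant :: "nat \<Rightarrow> 'd field" where
  "extrapolant k \<equiv> (\<lambda>m. ((step k + 2 * (t k - t (k - 1))) / (2 * (t k - t (k - 1)))) *\<^sub>R u k m
                        - (step k / (2 * (t k - t (k - 1)))) *\<^sub>R u (k - 1) m)"

abbreviation (input) nonlinear :: "nat \<Rightarrow> 'd field" where
  "nonlinear k \<equiv> specop L (\<lambda>x. phi1 (step k * \<nu> * x)) (Bop L (extrapolant k) (extrapolant k))"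

lemma step_pos: "step k > 0"
  using tpos[rule_format, of "k + 1"] by simp

lemma nodes_nonneg: "t k \<ge> 0"
proof (induction k)
  case (Suc k)
  then show ?case using step_pos[of k] by simp
qed (simp add: t0)

lemma scheme_step:
  assumes "k \<ge> 1"
  shows "u (k + 1) = (\<lambda>m. specop L (\<lambda>x. phi0 (step k * \<nu> * x)) (u k) m
                          - (step k * (1 - (r (k + 1))^2)) *\<^sub>R nonlinear k m
                          + step k *\<^sub>R specop L (\<lambda>x. phi1 (step k * \<nu> * x)) (F (t k + step k / 2)) m)"
    and "r (k + 1) = phi0 (step k * \<gamma>) * r k + step k * (1 - r (k + 1)) * l2inner L (nonlinear k) (u (k + 1))"
  using scheme[rule_format, OF assms] unfolding Let_def by blast+

lemma forcing:
  assumes "s \<ge> 0"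
  shows "square_summable (F s)" "F s 0 = 0" "l2norm_sq L (F s) \<le> (Linf_norm L F)^2"
proof -
  show "square_summable (F s)" "F s 0 = 0"
    using FH assms by (simp_all add: in_H_def square_summable_def)
  have "sqrt (l2norm_sq L (F s)) \<le> Linf_norm L F"
    unfolding Linf_norm_def by (rule cSUP_upper) (use assms Fbdd in auto)
  then show "l2norm_sq L (F s) \<le> (Linf_norm L F)^2"
    using l2norm_sq_nonneg[OF box] by (metis real_sqrt_ge_zero real_sqrt_pow2 power_mono)
qed

lemma in_Hdot_u: "in_Hdot (3/4) L (u k)"
proof (induction k rule: less_induct)
  case (less k)
  show ?case
  proof (cases "k \<le> 1")
    case True
    then show ?thesis using init alpha in_Hdot_antimono[OF box] by blast
  next
    case False
    then obtain j where k: "k = j + 1" and j: "j \<ge> 1"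
      by (metis add.commute le_add_diff_inverse less_imp_le_nat not_le_imp_less plus_1_eq_Suc Suc_leI)
    have "in_Hdot (3/4) L (extrapolant j)"
      using less k by (intro in_Hdot_diff in_Hdot_scaleR) auto
    then show ?thesis
      unfolding k scheme_step(1)[OF j]
      using less k dim step_pos[of j] nodes_nonneg[of j] forcing
      by (intro scheme_step_in_Hdot[OF box _ nu]) auto
  qed
qed

lemma energy_step:
  assumes "k \<ge> 1"
  shows "l2norm_sq L (u (k + 1)) + \<bar>r (k + 1) + 1\<bar>^2
    \<le> exp (- (min (\<nu> * lambda1 L) \<gamma> * step k)) * (l2norm_sq L (u k) + \<bar>r k + 1\<bar>^2)
      + (1 - exp (- (min (\<nu> * lambda1 L) \<gamma> * step k)))
        * ((1 / min (\<nu> * lambda1 L) \<gamma>) * ((1 / (\<nu> * lambda1 L)) * (Linf_norm L F)^2 + \<gamma>))"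
proof -
  have \<theta>: "0 < min (\<nu> * lambda1 L) \<gamma>" using nu gam lambda1_pos[OF box] by simp
  have u: "square_summable (u j)" for j
    by (rule square_summable_if_in_Hdot[OF box _ in_Hdot_u]) simp
  have "in_Hdot (3/4) L (extrapolant k)" by (intro in_Hdot_diff in_Hdot_scaleR in_Hdot_u)
  then have "in_Hdot (3/4) L (nonlinear k)"
    using dim nu step_pos[of k] by (intro in_Hdot_phi1_Bop[OF box]) auto
  then have g: "square_summable (nonlinear k)"
    by (rule square_summable_if_in_Hdot[OF box, rotated]) simp
  have "t k + step k / 2 \<ge> 0" using nodes_nonneg[of k] step_pos[of k] by simp
  note Fk = forcing[OF this]
  have "u k 0 = 0" using in_Hdot_u by (simp add: in_Hdot_def)
  with \<theta> show ?thesis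
    by (intro sav_energy_step[OF box nu step_pos _ _ _ u _ Fk u g scheme_step[OF assms]]) simp_all
qed

lemma energy_bound:
  assumes "n \<ge> 1"
  shows "l2norm_sq L (u (n + 1)) + \<bar>r (n + 1) + 1\<bar>^2
    \<le> exp (- min (\<nu> * lambda1 L) \<gamma> * (\<Sum>i=1..n. t (i + 1) - t i)) * (l2norm_sq L (u 1) + \<bar>r 1 + 1\<bar>^2)
       + (1 / min (\<nu> * lambda1 L) \<gamma>) * ((1 / (\<nu> * lambda1 L)) * (Linf_norm L F)^2 + \<gamma>)"
proof -
  define K where "K = (1 / min (\<nu> * lambda1 L) \<gamma>) * ((1 / (\<nu> * lambda1 L)) * (Linf_norm L F)^2 + \<gamma>)"
  define q where "q = exp (- min (\<nu> * lambda1 L) \<gamma> * (\<Sum>i=1..n. step i))"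
  have "0 \<le> q * K" using nu gam lambda1_pos[OF box] by (simp add: q_def K_def)
  then have "(1 - q) * K \<le> K" by (simp add: left_diff_distrib)
  with exp_recursion_bound[where E="\<lambda>k. l2norm_sq L (u k) + \<bar>r k + 1\<bar>^2" and d=step,
      OF energy_step assms]
  show ?thesis
    unfolding K_def[symmetric] q_def[symmetric] by linarith
qed

end

theorem theorem1:
  fixes L :: "real^'d::finite"
    and \<nu> \<gamma> \<alpha> :: real
    and F :: "real \<Rightarrow> 'd field"
    and t :: "nat \<Rightarrow> real"
    and u :: "nat \<Rightarrow> 'd field"
    and r :: "nat \<Rightarrow> real"
    and n :: nat
  defines "\<theta> \<equiv> min (\<nu> * lambda1 L) \<gamma>"
  assumes dim: "CARD('d) = 2 \<or> CARD('d) = 3"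
    and box: "\<forall>j. L $ j > 0"
    and nu: "\<nu> > 0" and gam: "\<gamma> > 0"
    and FH: "\<forall>s\<ge>0. in_H L (F s)"
    and Fbdd: "bdd_above ((\<lambda>s. sqrt (l2norm_sq L (F s))) ` {0..})"
    and t0: "t 0 = 0"
    and tpos: "\<forall>k\<ge>1. t k - t (k - 1) > 0"
    and alpha: "\<alpha> \<ge> 3/4"
    and init: "\<forall>i\<le>1. in_H L (u i) \<and> in_Hdot \<alpha> L (u i)"
    and scheme: "\<forall>k\<ge>1.
       let \<tau>k = t k - t (k - 1); \<tau> = t (k + 1) - t k;
           ut = (\<lambda>m. ((\<tau> + 2 * \<tau>k) / (2 * \<tau>k)) *\<^sub>R u k m - (\<tau> / (2 * \<tau>k)) *\<^sub>R u (k - 1) m);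
           g = specop L (\<lambda>x. phi1 (\<tau> * \<nu> * x)) (Bop L ut ut)
       in u (k + 1) = (\<lambda>m. specop L (\<lambda>x. phi0 (\<tau> * \<nu> * x)) (u k) m
                            - (\<tau> * (1 - (r (k + 1))\<^sup>2)) *\<^sub>R g m
                            + \<tau> *\<^sub>R specop L (\<lambda>x. phi1 (\<tau> * \<nu> * x)) (F (t k + \<tau> / 2)) m)
        \<and> r (k + 1) = phi0 (\<tau> * \<gamma>) * r k + \<tau> * (1 - r (k + 1)) * l2inner L g (u (k + 1))"
    and n1: "n \<ge> 1"
  shows "l2norm_sq L (u (n + 1)) + \<bar>r (n + 1) + 1\<bar>\<^sup>2
    \<le> exp (- \<theta> * (\<Sum>i=1..n. t (i + 1) - t i)) * (l2norm_sq L (u 1) + \<bar>r 1 + 1\<bar>\<^sup>2)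
       + (1 / \<theta>) * ((1 / (\<nu> * lambda1 L)) * (Linf_norm L F)\<^sup>2 + \<gamma>)"
proof -
  interpret etd_sav_ms2 L \<nu> \<gamma> \<alpha> F t u r
    using assms by unfold_locales auto
  show ?thesis unfolding \<theta>_def by (rule energy_bound[OF n1])
qed

end
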